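(* Let $H$ be a connected $m$-uniform cored hypergraph on $n$ vertices with $t$ edges. Then $s(H)=m^{n-1-t}$ and $\gamma(H)=(n-1-t)\mathrm{cl}(m)$.
   Context: An $m$-uniform hypergraph $G$ has vertex set $\{v_1,\dots,v_n\}$ and edge set a set of $m$-element subsets. It is cored if every edge contains a vertex of degree one (lying in no other edge). The adjacency tensor $\mathcal{A}(G)$ is the order-$m$, dimension-$n$ tensor with $a_{i_1\cdots i_m}=\frac{1}{(m-1)!}$ if $\{v_{i_1},\dots,v_{i_m}\}$ is an edge and $0$ otherwise; for connected $G$ it is nonnegative, symmetric and weakly irreducible. For a tensor $\mathcal{A}$: eigenvectors satisfy $\mathcal{A}x^{m-1}=\lambda x^{[m-1]}$, $x\ne0$, with $(\mathcal{A}x^{m-1})_i=\sum a_{ii_2\cdots i_m}x_{i_2}\cdots x_{i_m}$; $\rho(\mathcal{A})$ is the spectral radius. Stabilizing index $s(\mathcal{A})$: number of invertible diagonal $D$ with $d_{11}=1$ and $\mathcal{A}=D^{-(m-1)}\mathcal{A}D$, where $(D^{-(m-1)}\mathcal{A}D)_{i_1\cdots i_m}=d_{i_1}^{-(m-1)}a_{i_1\cdots i_m}d_{i_2}\cdots d_{i_m}$. Stabilizing dimension $\gamma(\mathcal{A})$: composition length of the $\mathbb{Z}_m$-module formed by the eigenvectors $y$ for $\rho(\mathcal{A})$ normalized by $y_1=1$ (no zero entries), with operation $y\circ\hat y=D_yD_{\hat y}v_p$, $D_y=\mathrm{diag}(y_i/|y_i|)$, $v_p$ the positive one. $s(G)=s(\mathcal{A}(G))$,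 $\gamma(G)=\gamma(\mathcal{A}(G))$. $\mathrm{cl}(m)$: number of prime factors of $m$ with multiplicity. *)

theory Defs
  imports Complex_Main "HOL-Algebra.Group" "HOL-Computational_Algebra.Primes"
begin

section \<open>Hypergraphs on the vertex set {0..<n} (vertex v_(i+1) is the index i)\<close>

definition uniform_hypergraph :: "nat \<Rightarrow> nat \<Rightarrow> nat set set \<Rightarrow> bool" where
  "uniform_hypergraph m n E \<longleftrightarrow> (\<forall>e\<in>E. e \<subseteq> {..<n} \<and> card e = m)"

definition hg_connected :: "nat \<Rightarrow> nat set set \<Rightarrow> bool" where
  "hg_connected n E \<longleftrightarrow>
     (\<forall>u<n. \<forall>v<n. (u, v) \<in> {(a, b). \<exists>e\<in>E. a \<in> e \<and> b \<in> e}\<^sup>*)"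

definition hg_degree :: "nat set set \<Rightarrow> nat \<Rightarrow> nat" where
  "hg_degree E v = card {e \<in> E. v \<in> e}"

definition cored :: "nat set set \<Rightarrow> bool" where
  "cored E \<longleftrightarrow> (\<forall>e\<in>E. \<exists>v\<in>e. hg_degree E v = 1)"

definition vecs :: "nat \<Rightarrow> (nat \<Rightarrow> complex) set" where
  "vecs n = {x. \<forall>i\<ge>n. x i = 0}"

definition index_lists :: "nat \<Rightarrow> nat \<Rightarrow> nat list set" where
  "index_lists k n = {is. length is = k \<and> set is \<subseteq> {..<n}}"

definition tensor_apply ::
  "nat \<Rightarrow> nat \<Rightarrow> (nat list \<Rightarrow> complex) \<Rightarrow> (nat \<Rightarrow> complex) \<Rightarrow> nat \<Rightarrow> complex" where
  "tensor_apply m n A x i =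
     (\<Sum>is\<in>index_lists (m - 1) n. A (i # is) * prod_list (map x is))"

definition eigenpair ::
  "nat \<Rightarrow> nat \<Rightarrow> (nat list \<Rightarrow> complex) \<Rightarrow> complex \<Rightarrow> (nat \<Rightarrow> complex) \<Rightarrow> bool" where
  "eigenpair m n A lam x \<longleftrightarrow> x \<in> vecs n \<and> (\<exists>i<n. x i \<noteq> 0) \<and>
     (\<forall>i<n. tensor_apply m n A x i = lam * x i ^ (m - 1))"

definition tensor_spectral_radius :: "nat \<Rightarrow> nat \<Rightarrow> (nat list \<Rightarrow> complex) \<Rightarrow> real" where
  "tensor_spectral_radius m n A = Sup {cmod lam | lam. \<exists>x. eigenpair m n A lam x}"

text \<open>Stabilizing index: number of invertible diagonal D (entries d_i, d_1 = 1) with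
  A = D^(-(m-1)) A D.\<close>
definition stab_index :: "nat \<Rightarrow> nat \<Rightarrow> (nat list \<Rightarrow> complex) \<Rightarrow> nat" where
  "stab_index m n A = card {d. d \<in> vecs n \<and> d 0 = 1 \<and> (\<forall>i<n. d i \<noteq> 0) \<and>
     (\<forall>is\<in>index_lists m n.
        inverse (d (hd is) ^ (m - 1)) * A is * prod_list (map d (tl is)) = A is)}"

definition rho_eigvecs :: "nat \<Rightarrow> nat \<Rightarrow> (nat list \<Rightarrow> complex) \<Rightarrow> (nat \<Rightarrow> complex) set" where
  "rho_eigvecs m n A = {y. eigenpair m n A (complex_of_real (tensor_spectral_radius m n A)) y
      \<and> y 0 = 1 \<and> (\<forall>i<n. y i \<noteq> 0)}"

definition pos_eigvec :: "nat \<Rightarrow> nat \<Rightarrow> (nat list \<Rightarrow> complex) \<Rightarrow> nat \<Rightarrow> complex" where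
  "pos_eigvec m n A = (THE v. v \<in> rho_eigvecs m n A \<and>
      (\<forall>i<n. v i \<in> \<real> \<and> Re (v i) > 0))"

text \<open>The module: operation y o y' = D_y D_y' v_p with D_y = diag(y_i/|y_i|).\<close>
definition stab_module :: "nat \<Rightarrow> nat \<Rightarrow> (nat list \<Rightarrow> complex) \<Rightarrow> (nat \<Rightarrow> complex) monoid" where
  "stab_module m n A =
     \<lparr>carrier = rho_eigvecs m n A,
      monoid.mult = (\<lambda>y z i. (y i / complex_of_real (cmod (y i))) *
                      (z i / complex_of_real (cmod (z i))) * pos_eigvec m n A i),
      monoid.one = pos_eigvec m n A\<rparr>"

text \<open>Z_m-submodules of a Z_m-module written multiplicatively (scalar k acts by k-th power).\<close>
definition Zm_submodule :: "('a, 'b) monoid_scheme \<Rightarrow> 'a set \<Rightarrow> bool" where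
  "Zm_submodule G H \<longleftrightarrow> subgroup H G \<and> (\<forall>k::nat. \<forall>y\<in>H. y [^]\<^bsub>G\<^esub> k \<in> H)"

definition composition_length :: "('a, 'b) monoid_scheme \<Rightarrow> nat" where
  "composition_length G = (GREATEST k. \<exists>C :: nat \<Rightarrow> 'a set.
      (\<forall>i\<le>k. Zm_submodule G (C i)) \<and> (\<forall>i<k. C i \<subset> C (Suc i)))"

definition stab_dim :: "nat \<Rightarrow> nat \<Rightarrow> (nat list \<Rightarrow> complex) \<Rightarrow> nat" where
  "stab_dim m n A = composition_length (stab_module m n A)"

definition adj_tensor :: "nat \<Rightarrow> nat set set \<Rightarrow> nat list \<Rightarrow> complex" where
  "adj_tensor m E is = (if length is = m \<and> set is \<in> E then 1 / of_nat (fact (m - 1)) else 0)"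

definition hg_s :: "nat \<Rightarrow> nat \<Rightarrow> nat set set \<Rightarrow> nat" where
  "hg_s m n E = stab_index m n (adj_tensor m E)"

definition hg_gamma :: "nat \<Rightarrow> nat \<Rightarrow> nat set set \<Rightarrow> nat" where
  "hg_gamma m n E = stab_dim m n (adj_tensor m E)"

definition cl :: "nat \<Rightarrow> nat" where
  "cl m = size (prime_factorization m)"

end

(*
  A diagonal D fixes the adjacency tensor iff its entries d_i satisfy, for every edge e and
  i in e, prod_(j in e - {i}) d_j = d_i^(m-1); by connectivity (and d_1 = 1) this says exactly
  that every d_i is an m-th root of unity and every edge has product 1.  In a cored hypergraph
  each edge has a core vertex lying in no other edge, whose entry is forced by the others, so
  the normalized D correspond to free choices of m-th roots of unity on the n - t non-core
  vertices up to a common factor: m^(n-1-t) of them.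

  A maximizer of sum_e prod_(j in e) x_j on the nonnegative part of the sphere sum_i x_i^m = 1
  is positive (connectivity lets a zero entry be raised profitably) and is an eigenvector for
  the spectral radius.  Comparing any eigenvector with this Perron vector through the triangle
  inequality shows that the normalized eigenvectors for the spectral radius are exactly the
  D v_p, and the module operation is multiplication of the D.  So the stabilizing module is
  (Z_m)^(n-1-t); the length of a chain of subgroups of a group of order N is at most cl(N),
  and refining coordinate by coordinate along the prime factors of m attains (n-1-t) cl(m).
*)
theory Submission
  imports Defs "HOL-Algebra.Coset" "HOL-Analysis.Analysis" "HOL-Combinatorics.Multiset_Permutations"
begin

lemma prod_mono_eq_imp_eq:
  fixes f g :: "'a \<Rightarrow> real"
  assumes "finite A" and le: "\<And>j. j \<in> A \<Longrightarrow> 0 \<le> f j \<and> f j \<le> g j"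
    and pos: "\<And>j. j \<in> A \<Longrightarrow> g j > 0" and eq: "prod f A = prod g A" and k: "k \<in> A"
  shows "f k = g k"
proof (rule ccontr)
  assume "f k \<noteq> g k"
  hence lt: "f k < g k" using le[OF k] by simp
  have "prod f A = f k * prod f (A - {k})" using assms(1) k by (simp add: prod.remove)
  also have "\<dots> \<le> f k * prod g (A - {k})"
    by (rule mult_left_mono[OF prod_mono]) (use le k in auto)
  also have "\<dots> < g k * prod g (A - {k})"
    by (rule mult_strict_right_mono[OF lt]) (rule prod_pos, use pos in auto)
  also have "\<dots> = prod g A" using assms(1) k by (simp add: prod.remove)
  finally show False using eq by simp
qed

lemma Re_eq_cmod_imp_of_real: "Re z = cmod z \<Longrightarrow> z = complex_of_real (cmod z)"
proof -
  assume H: "Re z = cmod z"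
  have "cmod z ^ 2 = Re z ^ 2 + Im z ^ 2" by (rule cmod_power2)
  hence "Im z = 0" using H by simp
  thus ?thesis using H by (simp add: complex_eq_iff)
qed

lemma sum_norm_eq_imp_aligned:
  fixes z :: "'a \<Rightarrow> complex"
  assumes S: "finite S" and sum: "(\<Sum>e\<in>S. z e) = complex_of_real R * u" and u: "cmod u = 1"
    and norms: "(\<Sum>e\<in>S. cmod (z e)) = R" and e: "e \<in> S"
  shows "z e = complex_of_real (cmod (z e)) * u"
proof -
  define w where "w = cnj u"
  have uw: "u * w = 1" unfolding w_def using u complex_norm_square[of u] by simp
  have "(\<Sum>e\<in>S. Re (z e * w)) = Re ((\<Sum>e\<in>S. z e) * w)" by (simp add: Re_sum sum_distrib_right)
  also have "\<dots> = R" using sum uw by (simp add: mult.assoc)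
  also have "\<dots> = (\<Sum>e\<in>S. cmod (z e * w))" using norms u by (simp add: norm_mult w_def)
  finally have "Re (z e * w) = cmod (z e * w)"
    by (rule sum_mono_inv[OF _ _ e S]) (rule complex_Re_le_cmod)
  hence "z e * w = complex_of_real (cmod (z e))"
    using Re_eq_cmod_imp_of_real u by (metis norm_mult w_def complex_mod_cnj mult.right_neutral)
  hence "z e * w * u = complex_of_real (cmod (z e)) * u" by simp
  thus ?thesis using uw by (simp add: mult.assoc mult.commute[of w u])
qed

lemma small_power_dominated:
  fixes c C :: real
  assumes "k < m" and "c > 0" and "C \<ge> 0"
  obtains \<delta> where "\<delta> > 0" and "C * \<delta> ^ m < \<delta> ^ k * c"
proof
  define \<delta> where "\<delta> = min 1 (c / (C + 1))"
  show pos: "\<delta> > 0" unfolding \<delta>_def using assms by simp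
  have "\<delta> ^ m \<le> \<delta> ^ Suc k"
    by (rule power_decreasing) (use assms pos in \<open>auto simp: \<delta>_def\<close>)
  hence "C * \<delta> ^ m \<le> \<delta> ^ k * (C * \<delta>)" using assms(3) by (simp add: mult_left_mono algebra_simps)
  also have "C * \<delta> < c"
  proof -
    have "C * \<delta> \<le> C * (c / (C + 1))" unfolding \<delta>_def by (rule mult_left_mono) (use assms(3) in auto)
    also have "\<dots> < c" using assms by (simp add: field_simps)
    finally show ?thesis .
  qed
  hence "\<delta> ^ k * (C * \<delta>) < \<delta> ^ k * c" using pos by simp
  finally show "C * \<delta> ^ m < \<delta> ^ k * c" .
qed

lemma root_of_unity_power_eq_1_iff:
  assumes "q \<ge> 1"
  shows "exp (2 * of_real pi * \<i> / of_nat q) ^ k = 1 \<longleftrightarrow> q dvd k"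
proof -
  have "exp (2 * of_real pi * \<i> / of_nat q) ^ k = exp (2 * of_real pi * \<i> * of_nat k / of_nat q)"
    by (simp add: exp_of_nat_mult[symmetric] mult_ac)
  thus ?thesis using complex_root_unity_eq_1[OF assms] by simp
qed

section \<open>Chains of subgroups\<close>

lemma subgroup_card_dvd:
  assumes G: "group G" and I: "subgroup I G" and J: "subgroup J G" and IJ: "I \<subseteq> J"
  shows "card I dvd card J"
proof -
  have "group (G\<lparr>carrier := J\<rparr>)" using subgroup.subgroup_is_group[OF J G] .
  moreover have "subgroup I (G\<lparr>carrier := J\<rparr>)" using group.subgroup_incl[OF G I J IJ] .
  ultimately have "card (rcosets\<^bsub>G\<lparr>carrier := J\<rparr>\<^esub> I) * card I = card J"
    using group.lagrange by (fastforce simp: Coset.order_def)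
  thus ?thesis by (metis dvd_triv_right)
qed

lemma cl_mult: "a \<noteq> 0 \<Longrightarrow> b \<noteq> 0 \<Longrightarrow> cl (a * b) = cl a + cl b"
  by (simp add: cl_def prime_factorization_mult)

lemma cl_power: "a \<noteq> 0 \<Longrightarrow> cl (a ^ k) = k * cl a"
  by (induction k) (simp_all add: cl_mult, simp add: cl_def)

lemma cl_dvd_mono: "b \<noteq> 0 \<Longrightarrow> a dvd b \<Longrightarrow> cl a \<le> cl b"
  unfolding cl_def by (metis dvd_0_left_iff prime_factorization_subset_iff_dvd size_mset_mono)

lemma cl_pos: "a \<ge> 2 \<Longrightarrow> cl a \<ge> 1"
proof -
  assume "a \<ge> 2"
  hence "prime_factorization a \<noteq> {#}" by (subst prime_factorization_empty_iff) auto
  thus ?thesis unfolding cl_def by (simp add: Suc_le_eq nonempty_has_size)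
qed

text \<open>Each proper inclusion of subgroups multiplies the order by a factor at least 2.\<close>
lemma subgroup_chain_length_le:
  assumes G: "group G" and fin: "finite (carrier G)"
    and sub: "\<forall>i\<le>k. subgroup (C i) G" and strict: "\<forall>i<k. C i \<subset> C (Suc i)"
  shows "k \<le> cl (card (carrier G))"
proof -
  have card_pos: "card H > 0" if "subgroup H G" for H
    using that fin by (metis card_gt_0_iff empty_iff finite_subset subgroup.one_closed subgroup.subset)
  have "i \<le> cl (card (C i))" if "i \<le> k" for i
    using that
  proof (induction i)
    case (Suc i)
    have si: "subgroup (C i) G" "subgroup (C (Suc i)) G" and st: "C i \<subset> C (Suc i)"
      using sub strict Suc.prems by auto
    obtain q where q: "card (C (Suc i)) = card (C i) * q"
      using subgroup_card_dvd[OF G si psubset_imp_subset[OF st]] by (auto simp: dvd_def)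
    have p: "card (C i) > 0" "card (C (Suc i)) > 0" using card_pos si by auto
    have "card (C i) < card (C (Suc i))" using psubset_card_mono[OF _ st] p(2) card_gt_0_iff by blast
    hence "q \<ge> 2" using q p by (metis One_nat_def less_2_cases_iff mult.right_neutral mult_0_right not_le order.irrefl)
    hence "cl (card (C (Suc i))) = cl (card (C i)) + cl q" and "cl q \<ge> 1"
      using q p cl_mult cl_pos by auto
    thus ?case using Suc by simp
  qed simp
  hence "k \<le> cl (card (C k))" by simp
  also have "\<dots> \<le> cl (card (carrier G))"
  proof (rule cl_dvd_mono)
    show "card (carrier G) \<noteq> 0" using card_pos[OF group.subgroup_self[OF G]] by simp
    show "card (C k) dvd card (carrier G)"
      using subgroup_card_dvd[OF G _ group.subgroup_self[OF G]] sub subgroup.subset by blast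
  qed
  finally show ?thesis .
qed

definition prime_list :: "nat \<Rightarrow> nat list" where
  "prime_list k = sorted_list_of_multiset (prime_factorization k)"

definition prime_prefix_prod :: "nat \<Rightarrow> nat \<Rightarrow> nat" where
  "prime_prefix_prod k b = prod_list (take b (prime_list k))"

lemma mset_prime_list: "mset (prime_list k) = prime_factorization k"
  by (simp add: prime_list_def)

lemma length_prime_list: "length (prime_list k) = cl k"
  unfolding cl_def mset_prime_list[symmetric] by (rule size_mset[symmetric])

lemma prime_list_prime: "q \<in> set (prime_list k) \<Longrightarrow> prime q"
proof -
  assume "q \<in> set (prime_list k)"
  hence "q \<in> prime_factors k" by (simp flip: mset_prime_list)
  thus ?thesis by (rule in_prime_factors_imp_prime)
qed

lemma prime_prefix_prod_pos: "prime_prefix_prod k b > 0"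
proof -
  have "0 \<notin> set (take b (prime_list k))"
  proof
    assume "0 \<in> set (take b (prime_list k))"
    hence "prime (0::nat)" by (rule prime_list_prime[OF in_set_takeD])
    thus False by simp
  qed
  hence "prod_list (take b (prime_list k)) \<noteq> 0" by (simp add: prod_list_zero_iff)
  thus ?thesis by (simp add: prime_prefix_prod_def)
qed

lemma prime_prefix_prod_dvd: "b \<le> b' \<Longrightarrow> prime_prefix_prod k b dvd prime_prefix_prod k b'"
proof -
  assume "b \<le> b'"
  hence "take b' (prime_list k) = take b (prime_list k) @ take (b' - b) (drop b (prime_list k))"
    using take_add[of b "b' - b" "prime_list k"] by simp
  thus ?thesis unfolding prime_prefix_prod_def by simp
qed

lemma prime_prefix_prod_less:
  assumes "b < cl k"
  shows "prime_prefix_prod k b < prime_prefix_prod k (Suc b)"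
proof -
  have "prime_list k ! b \<ge> 2"
    using assms prime_list_prime[OF nth_mem] length_prime_list prime_ge_2_nat by auto
  moreover have "prime_prefix_prod k (Suc b) = prime_prefix_prod k b * prime_list k ! b"
    using assms length_prime_list by (simp add: prime_prefix_prod_def take_Suc_conv_app_nth)
  ultimately show ?thesis using prime_prefix_prod_pos[of k b] by simp
qed

lemma prime_prefix_prod_dvd_self: "k \<noteq> 0 \<Longrightarrow> prime_prefix_prod k b dvd k"
proof -
  assume "k \<noteq> 0"
  have "prime_prefix_prod k (cl k) = k"
    using \<open>k \<noteq> 0\<close> length_prime_list[of k]
    by (simp add: prime_prefix_prod_def prime_list_def prod_mset_prod_list[symmetric])
  moreover have "prime_prefix_prod k b = prime_prefix_prod k (cl k)" if "b \<ge> cl k"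
    using that length_prime_list by (simp add: prime_prefix_prod_def)
  ultimately show ?thesis using prime_prefix_prod_dvd[of b "cl k" k] by (cases "b \<le> cl k") auto
qed

section \<open>Connected uniform hypergraphs\<close>

lemma finite_index_lists: "finite (index_lists k n)"
proof -
  have "index_lists k n = {xs. set xs \<subseteq> {..<n} \<and> length xs = k}" by (auto simp: index_lists_def)
  thus ?thesis using finite_lists_length_eq[of "{..<n}" k] by simp
qed

definition adj_apply :: "nat set set \<Rightarrow> (nat \<Rightarrow> 'a::comm_semiring_1) \<Rightarrow> nat \<Rightarrow> 'a" where
  "adj_apply E x i = (\<Sum>e\<in>{e\<in>E. i\<in>e}. \<Prod>j\<in>e-{i}. x j)"

lemma adj_apply_of_real:
  "adj_apply E (\<lambda>j. of_real (x j)) i = (of_real (adj_apply E x i) :: 'a::{real_algebra_1,comm_semiring_1})"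
  by (simp add: adj_apply_def of_real_sum of_real_prod)

locale connected_uniform_hypergraph =
  fixes m n :: nat and E :: "nat set set"
  assumes m_ge_2: "m \<ge> 2" and n_pos: "n \<ge> 1" and uniform: "uniform_hypergraph m n E"
    and connected: "hg_connected n E"
begin

lemma edge_subset: "e \<in> E \<Longrightarrow> e \<subseteq> {..<n}"
  using uniform by (auto simp: uniform_hypergraph_def)

lemma edge_vertex_less: "e \<in> E \<Longrightarrow> i \<in> e \<Longrightarrow> i < n"
  using edge_subset by blast

lemma card_edge: "e \<in> E \<Longrightarrow> card e = m"
  using uniform by (auto simp: uniform_hypergraph_def)

lemma finite_edge: "e \<in> E \<Longrightarrow> finite e"
  using edge_subset finite_subset by blast

lemma finite_edges: "finite E"
  by (rule finite_subset[of E "Pow {..<n}"]) (use edge_subset in auto)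

lemma card_edge_remove: "e \<in> E \<Longrightarrow> i \<in> e \<Longrightarrow> card (e - {i}) = m - 1"
  using card_edge finite_edge by (simp add: card_Diff_singleton)

lemma edge_nonempty: "e \<in> E \<Longrightarrow> e \<noteq> {}"
  using card_edge m_ge_2 by fastforce

lemma mult_power_m_minus_1: "(z::'a::monoid_mult) * z ^ (m - 1) = z ^ m"
  using m_ge_2 by (metis Suc_diff_1 less_le_trans pos2 power_Suc)

lemma power_m_eq_1_imp_nonzero:
  assumes "(z::'a::semiring_1) ^ m = 1" shows "z \<noteq> 0"
  using assms m_ge_2 by (metis zero_neq_one power_0_left not_numeral_le_zero le_zero_eq)

lemma connected_propagate:
  assumes step: "\<And>e a b. e \<in> E \<Longrightarrow> a \<in> e \<Longrightarrow> b \<in> e \<Longrightarrow> P a \<Longrightarrow> P b"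
    and "i < n" and "P i" and "j < n"
  shows "P j"
proof -
  have "(i, j) \<in> {(a, b). \<exists>e\<in>E. a \<in> e \<and> b \<in> e}\<^sup>*"
    using connected assms(2,4) by (auto simp: hg_connected_def)
  thus ?thesis by (induction rule: rtrancl_induct) (use \<open>P i\<close> step in blast)+
qed

lemma exists_crossing_edge:
  assumes "i < n" "i \<in> Z" "j < n" "j \<notin> Z"
  obtains e a b where "e \<in> E" "a \<in> e" "b \<in> e" "a \<notin> Z" "b \<in> Z"
proof -
  have "\<not> (\<forall>e\<in>E. \<forall>a\<in>e. \<forall>b\<in>e. b \<in> Z \<longrightarrow> a \<in> Z)"
  proof
    assume closed: "\<forall>e\<in>E. \<forall>a\<in>e. \<forall>b\<in>e. b \<in> Z \<longrightarrow> a \<in> Z"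
    have "j \<in> Z"
      by (rule connected_propagate[where P = "\<lambda>v. v \<in> Z", OF _ assms(1,2,3)]) (use closed in blast)
    thus False using assms(4) by simp
  qed
  thus ?thesis using that by blast
qed

lemma adj_tensor_nonzero_iff: "adj_tensor m E xs \<noteq> 0 \<longleftrightarrow> length xs = m \<and> set xs \<in> E"
  by (simp add: adj_tensor_def)

lemma adj_tensor_nonzero_distinct: "adj_tensor m E xs \<noteq> 0 \<Longrightarrow> distinct xs"
  using adj_tensor_nonzero_iff card_edge by (metis card_distinct)

lemma adj_tensor_edge_list:
  assumes "e \<in> E" and "i \<in> e" and xs: "xs \<in> permutations_of_set (e - {i})"
  shows "i # xs \<in> index_lists m n" and "adj_tensor m E (i # xs) = 1 / of_nat (fact (m - 1))"
    and "prod_list (map x xs) = (\<Prod>j\<in>e-{i}. x j)"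
proof -
  have "length xs = m - 1"
    using length_finite_permutations_of_set[OF xs] card_edge_remove assms by simp
  hence len: "length (i # xs) = m" using m_ge_2 by simp
  have set: "set (i # xs) = e" using permutations_of_setD(1)[OF xs] assms(2) by auto
  show "i # xs \<in> index_lists m n" using len set edge_subset[OF assms(1)] by (simp add: index_lists_def)
  show "adj_tensor m E (i # xs) = 1 / of_nat (fact (m - 1))" using len set assms(1) by (simp add: adj_tensor_def)
  show "prod_list (map x xs) = (\<Prod>j\<in>e-{i}. x j)"
    using permutations_of_setD[OF xs] by (metis prod.distinct_set_conv_list)
qed

text \<open>The (m-1)! orderings of e - {i} cancel the normalisation of the adjacency tensor.\<close>
lemma tensor_apply_adj_tensor:
  fixes x :: "nat \<Rightarrow> complex"
  assumes "i < n"
  shows "tensor_apply m n (adj_tensor m E) x i = adj_apply E x i"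
proof -
  let ?S = "{e\<in>E. i\<in>e}"
  let ?T = "\<Union>e\<in>?S. permutations_of_set (e - {i})"
  let ?g = "\<lambda>xs. adj_tensor m E (i # xs) * prod_list (map x xs)"
  have T_sub: "?T \<subseteq> index_lists (m - 1) n"
    using adj_tensor_edge_list(1) by (force simp: index_lists_def)
  have outside_T: "?g xs = 0" if "xs \<notin> ?T" for xs
  proof (rule ccontr)
    assume "?g xs \<noteq> 0"
    hence nz: "adj_tensor m E (i # xs) \<noteq> 0" by auto
    hence "distinct (i # xs)" by (rule adj_tensor_nonzero_distinct)
    hence "xs \<in> permutations_of_set (set (i # xs) - {i})" by (auto simp: permutations_of_set_def)
    thus False using that nz adj_tensor_nonzero_iff by auto
  qed
  have per_edge: "(\<Sum>xs\<in>permutations_of_set (e - {i}). ?g xs) = (\<Prod>j\<in>e-{i}. x j)" if "e \<in> ?S" for e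
  proof -
    have "(\<Sum>xs\<in>permutations_of_set (e - {i}). ?g xs)
        = (\<Sum>xs\<in>permutations_of_set (e - {i}). (\<Prod>j\<in>e-{i}. x j) / of_nat (fact (m - 1)))"
      using adj_tensor_edge_list[of e i] that by (intro sum.cong) auto
    moreover have "card (permutations_of_set (e - {i})) = fact (m - 1)"
      using that finite_edge card_edge by simp
    ultimately show ?thesis by simp
  qed
  have "tensor_apply m n (adj_tensor m E) x i = (\<Sum>xs\<in>?T. ?g xs)"
    unfolding tensor_apply_def
    by (rule sum.mono_neutral_right[OF finite_index_lists T_sub]) (use outside_T in blast)
  also have "\<dots> = (\<Sum>e\<in>?S. \<Sum>xs\<in>permutations_of_set (e - {i}). ?g xs)"
    by (rule sum.UNION_disjoint) (simp_all add: finite_edges, auto simp: permutations_of_set_def)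
  also have "\<dots> = adj_apply E x i" unfolding adj_apply_def using per_edge by simp
  finally show ?thesis .
qed

lemma eigenpair_adj_tensor_iff:
  "eigenpair m n (adj_tensor m E) lam x \<longleftrightarrow>
     x \<in> vecs n \<and> (\<exists>i<n. x i \<noteq> 0) \<and> (\<forall>i<n. adj_apply E x i = lam * x i ^ (m - 1))"
  unfolding eigenpair_def using tensor_apply_adj_tensor by auto

lemma adj_apply_scale:
  fixes x :: "nat \<Rightarrow> 'a::comm_semiring_1"
  shows "adj_apply E (\<lambda>j. c j * x j) i = (\<Sum>e\<in>{e\<in>E. i\<in>e}. (\<Prod>j\<in>e-{i}. c j) * (\<Prod>j\<in>e-{i}. x j))"
  unfolding adj_apply_def by (simp add: prod.distrib)

lemma adj_apply_scale_const:
  fixes x :: "nat \<Rightarrow> 'a::comm_semiring_1"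
  shows "adj_apply E (\<lambda>j. c * x j) i = c ^ (m - 1) * adj_apply E x i"
  unfolding adj_apply_def sum_distrib_left by (intro sum.cong) (auto simp: prod.distrib card_edge)

section \<open>Diagonal similarities fixing the adjacency tensor\<close>

definition edge_balanced :: "(nat \<Rightarrow> complex) \<Rightarrow> bool" where
  "edge_balanced d \<longleftrightarrow> (\<forall>e\<in>E. \<forall>i\<in>e. (\<Prod>j\<in>e-{i}. d j) = d i ^ (m - 1))"

definition root_labellings :: "(nat \<Rightarrow> complex) set" where
  "root_labellings = {d. d \<in> vecs n \<and> (\<forall>i<n. d i ^ m = 1) \<and> (\<forall>e\<in>E. (\<Prod>j\<in>e. d j) = 1)}"

definition stab_set :: "(nat \<Rightarrow> complex) set" where
  "stab_set = {d \<in> root_labellings. d 0 = 1}"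

lemma root_labellings_nonzero: "d \<in> root_labellings \<Longrightarrow> i < n \<Longrightarrow> d i \<noteq> 0"
  using power_m_eq_1_imp_nonzero by (auto simp: root_labellings_def)

lemma root_labellings_outside: "d \<in> root_labellings \<Longrightarrow> \<not> i < n \<Longrightarrow> d i = 0"
  by (simp add: root_labellings_def vecs_def)

lemma stab_condition_iff_edge_balanced:
  fixes d :: "nat \<Rightarrow> complex"
  assumes nz: "\<forall>i<n. d i \<noteq> 0"
  shows "(\<forall>is\<in>index_lists m n. inverse (d (hd is) ^ (m - 1)) * adj_tensor m E is
            * prod_list (map d (tl is)) = adj_tensor m E is) \<longleftrightarrow> edge_balanced d"
    (is "(\<forall>is\<in>_. ?fixed is) \<longleftrightarrow> _")
proof
  have fixed_iff: "?fixed (i # xs) \<longleftrightarrow> (\<Prod>j\<in>e-{i}. d j) = d i ^ (m - 1)"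
    if "e \<in> E" "i \<in> e" "xs \<in> permutations_of_set (e - {i})" for e i xs
  proof -
    have "adj_tensor m E (i # xs) \<noteq> 0" using adj_tensor_edge_list(2)[OF that] by simp
    moreover have "d i \<noteq> 0" using nz edge_vertex_less[OF that(1,2)] by blast
    ultimately show ?thesis using adj_tensor_edge_list(3)[OF that, of d] by (auto simp: field_simps)
  qed
  {
    assume fixed: "\<forall>is\<in>index_lists m n. ?fixed is"
    show "edge_balanced d" unfolding edge_balanced_def
    proof (intro ballI)
      fix e i assume e: "e \<in> E" and i: "i \<in> e"
      obtain xs where xs: "xs \<in> permutations_of_set (e - {i})"
        using finite_edge[OF e] permutations_of_set_empty_iff by blast
      thus "(\<Prod>j\<in>e-{i}. d j) = d i ^ (m - 1)"
        using fixed adj_tensor_edge_list(1)[OF e i xs] fixed_iff[OF e i xs] by blast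
    qed
  next
    assume balanced: "edge_balanced d"
    show "\<forall>is\<in>index_lists m n. ?fixed is"
    proof
      fix "is" assume "is \<in> index_lists m n"
      show "?fixed is"
      proof (cases "adj_tensor m E is = 0")
        case False
        hence "length is = m" "set is \<in> E" "distinct is"
          using adj_tensor_nonzero_iff adj_tensor_nonzero_distinct by auto
        then obtain i xs where "is = i # xs" "set is \<in> E" "i \<in> set is"
            "xs \<in> permutations_of_set (set is - {i})"
          using m_ge_2 by (cases "is") (auto simp: permutations_of_set_def)
        thus ?thesis using fixed_iff balanced by (simp add: edge_balanced_def)
      qed simp
    qed
  }
qed

lemma edge_balanced_iff_root_labelling:
  fixes d :: "nat \<Rightarrow> complex"
  assumes nz: "\<forall>i<n. d i \<noteq> 0" and d0: "d 0 = 1"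
  shows "edge_balanced d \<longleftrightarrow> (\<forall>i<n. d i ^ m = 1) \<and> (\<forall>e\<in>E. (\<Prod>j\<in>e. d j) = 1)"
proof
  assume balanced: "edge_balanced d"
  have power_eq_prod: "d i ^ m = (\<Prod>j\<in>e. d j)" if "e \<in> E" "i \<in> e" for e i
  proof -
    have "(\<Prod>j\<in>e. d j) = d i * (\<Prod>j\<in>e-{i}. d j)" using finite_edge that by (simp add: prod.remove)
    also have "\<dots> = d i ^ m" using balanced that mult_power_m_minus_1 by (simp add: edge_balanced_def)
    finally show ?thesis by simp
  qed
  have roots: "\<forall>i<n. d i ^ m = 1"
    using connected_propagate[where P = "\<lambda>i. d i ^ m = 1" and i = 0] power_eq_prod n_pos d0 by force
  moreover have "(\<Prod>j\<in>e. d j) = 1" if "e \<in> E" for e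
    using edge_nonempty[OF that] power_eq_prod[OF that] roots edge_vertex_less[OF that] by force
  ultimately show "(\<forall>i<n. d i ^ m = 1) \<and> (\<forall>e\<in>E. (\<Prod>j\<in>e. d j) = 1)" by blast
next
  assume roots: "(\<forall>i<n. d i ^ m = 1) \<and> (\<forall>e\<in>E. (\<Prod>j\<in>e. d j) = 1)"
  show "edge_balanced d" unfolding edge_balanced_def
  proof (intro ballI)
    fix e i assume e: "e \<in> E" and i: "i \<in> e"
    have "d i * (\<Prod>j\<in>e-{i}. d j) = (\<Prod>j\<in>e. d j)" using finite_edge[OF e] i by (simp add: prod.remove)
    also have "\<dots> = d i * d i ^ (m - 1)" using roots e edge_vertex_less[OF e i] mult_power_m_minus_1[of "d i"] by simp
    finally show "(\<Prod>j\<in>e-{i}. d j) = d i ^ (m - 1)" using nz edge_vertex_less[OF e i] by simp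
  qed
qed

lemma stab_index_eq_card_stab_set: "stab_index m n (adj_tensor m E) = card stab_set"
proof -
  have "d \<in> stab_set \<longleftrightarrow> d \<in> vecs n \<and> d 0 = 1 \<and> (\<forall>i<n. d i \<noteq> 0) \<and>
      (\<forall>is\<in>index_lists m n.
        inverse (d (hd is) ^ (m - 1)) * adj_tensor m E is * prod_list (map d (tl is)) = adj_tensor m E is)"
    for d
    using stab_condition_iff_edge_balanced[of d] edge_balanced_iff_root_labelling[of d]
      root_labellings_nonzero[of d]
    by (auto simp: stab_set_def root_labellings_def)
  hence "{d. d \<in> vecs n \<and> d 0 = 1 \<and> (\<forall>i<n. d i \<noteq> 0) \<and>
      (\<forall>is\<in>index_lists m n.
        inverse (d (hd is) ^ (m - 1)) * adj_tensor m E is * prod_list (map d (tl is)) = adj_tensor m E is)}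
      = stab_set" by blast
  thus ?thesis unfolding stab_index_def by simp
qed

section \<open>A positive eigenvector\<close>

definition edge_form :: "(nat \<Rightarrow> real) \<Rightarrow> real" where
  "edge_form x = (\<Sum>e\<in>E. \<Prod>j\<in>e. x j)"

definition power_sum :: "(nat \<Rightarrow> real) \<Rightarrow> real" where
  "power_sum x = (\<Sum>i<n. x i ^ m)"

definition nonneg_vec :: "(nat \<Rightarrow> real) \<Rightarrow> bool" where
  "nonneg_vec x \<longleftrightarrow> (\<forall>i. 0 \<le> x i) \<and> (\<forall>i. n \<le> i \<longrightarrow> x i = 0)"

text \<open>The bound x_i \<le> 1 already follows from power_sum x = 1; it is stated to make compactness
  evident.\<close>
definition nonneg_sphere :: "(nat \<Rightarrow> real) set" where
  "nonneg_sphere = PiE UNIV (\<lambda>i. if i < n then {0..1} else {0}) \<inter> {x. power_sum x = 1}"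

definition is_maximizer :: "(nat \<Rightarrow> real) \<Rightarrow> bool" where
  "is_maximizer x \<longleftrightarrow> x \<in> nonneg_sphere \<and> (\<forall>y\<in>nonneg_sphere. edge_form y \<le> edge_form x)"

lemma edge_form_scale: "edge_form (\<lambda>j. c * x j) = c ^ m * edge_form x"
  unfolding edge_form_def by (simp add: sum_distrib_left prod.distrib card_edge)

lemma power_sum_scale: "power_sum (\<lambda>j. c * x j) = c ^ m * power_sum x"
  unfolding power_sum_def by (simp add: sum_distrib_left power_mult_distrib)

lemma edge_form_nonneg: "nonneg_vec x \<Longrightarrow> 0 \<le> edge_form x"
  unfolding edge_form_def nonneg_vec_def by (intro sum_nonneg prod_nonneg) auto

lemma power_sum_nonneg: "nonneg_vec x \<Longrightarrow> 0 \<le> power_sum x"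
  unfolding power_sum_def nonneg_vec_def by (intro sum_nonneg) auto

lemma mem_nonneg_sphere:
  "x \<in> nonneg_sphere \<longleftrightarrow> (\<forall>i<n. x i \<le> 1) \<and> nonneg_vec x \<and> power_sum x = 1"
proof -
  have "x \<in> PiE UNIV (\<lambda>i. if i < n then {0..1} else {0}) \<longleftrightarrow>
      (\<forall>i. x i \<in> (if i < n then {0..1} else {0}))"
    by (simp add: PiE_iff)
  also have "\<dots> \<longleftrightarrow> (\<forall>i<n. x i \<le> 1) \<and> nonneg_vec x"
    unfolding nonneg_vec_def by (auto simp: not_less) (metis not_le order.refl)
  finally show ?thesis by (simp add: nonneg_sphere_def)
qed

lemma compact_nonneg_sphere: "compact nonneg_sphere"
proof -
  have "compactin (product_topology (\<lambda>i. euclidean) UNIV) (PiE UNIV (\<lambda>i. if i < n then {0..1::real} else {0}))"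
    by (subst compactin_PiE) auto
  hence "compact (PiE UNIV (\<lambda>i. if i < n then {0..1::real} else {0}))"
    by (simp add: euclidean_product_topology compactin_euclidean_iff)
  moreover have "closed {x. power_sum x = 1}"
    unfolding power_sum_def
    by (intro closed_Collect_eq continuous_intros continuous_on_product_coordinates)
  ultimately show ?thesis unfolding nonneg_sphere_def using compact_Int_closed by blast
qed

lemma continuous_edge_form: "continuous_on S edge_form"
proof -
  have "continuous_on UNIV edge_form"
    unfolding edge_form_def by (intro continuous_intros continuous_on_product_coordinates)
  thus ?thesis using continuous_on_subset by blast
qed

lemma maximizer_exists: "\<exists>x. is_maximizer x"
proof -
  have unit: "(if i = 0 then 1 else 0::real) ^ m = (if i = 0 then 1 else 0)" for i
    using m_ge_2 by auto
  have "power_sum (\<lambda>i. if i = 0 then 1 else 0) = (\<Sum>i<n. if i = 0 then 1 else 0)"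
    unfolding power_sum_def unit ..
  hence "power_sum (\<lambda>i. if i = 0 then 1 else 0) = 1" using n_pos by (simp add: sum.delta')
  hence "(\<lambda>i. if i = 0 then 1 else 0) \<in> nonneg_sphere"
    using n_pos by (auto simp: mem_nonneg_sphere nonneg_vec_def)
  thus ?thesis unfolding is_maximizer_def
    using continuous_attains_sup[OF compact_nonneg_sphere _ continuous_edge_form] by blast
qed

text \<open>By homogeneity of degree m of both forms, the maximum on the sphere bounds the quotient.\<close>
lemma maximizer_bound:
  assumes x: "is_maximizer x" and y: "nonneg_vec y"
  shows "edge_form y \<le> edge_form x * power_sum y"
proof (cases "power_sum y = 0")
  case True
  have "y i ^ m = 0" if "i < n" for i
    using True y that unfolding power_sum_def nonneg_vec_def
    by (subst (asm) sum_nonneg_eq_0_iff) auto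
  hence "y i = 0" for i using y by (cases "i < n") (auto simp: nonneg_vec_def)
  hence "edge_form y = 0"
    unfolding edge_form_def using edge_nonempty finite_edge by (auto intro!: sum.neutral simp: card_gt_0_iff)
  thus ?thesis using True by simp
next
  case False
  hence pos: "power_sum y > 0" using power_sum_nonneg[OF y] by simp
  define s where "s = root m (power_sum y)"
  have s: "s > 0" "s ^ m = power_sum y" unfolding s_def using pos m_ge_2 by simp_all
  define z where "z = (\<lambda>i. y i / s)"
  have y_eq: "y = (\<lambda>i. s * z i)" unfolding z_def using s by auto
  have "z i \<le> 1" if "i < n" for i
  proof -
    have "y i ^ m \<le> s ^ m"
      using member_le_sum[of i "{..<n}" "\<lambda>i. y i ^ m"] that y s(2)
      by (auto simp: power_sum_def nonneg_vec_def)
    hence "y i \<le> s" using y s(1) m_ge_2 by (auto simp: nonneg_vec_def intro: power_le_imp_le_base)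
    thus ?thesis using s(1) by (simp add: z_def)
  qed
  moreover have "nonneg_vec z" using y s(1) by (simp add: nonneg_vec_def z_def)
  moreover have "power_sum z = 1" using power_sum_scale[of s z] y_eq s pos by simp
  ultimately have "edge_form z \<le> edge_form x" using x by (simp add: is_maximizer_def mem_nonneg_sphere)
  hence "s ^ m * edge_form z \<le> s ^ m * edge_form x" using s(1) by simp
  thus ?thesis using edge_form_scale[of s z] y_eq s(2) by (simp add: mult.commute)
qed

lemma edge_form_increase:
  assumes le: "\<And>j. 0 \<le> x j \<and> x j \<le> y j" and e: "e \<in> E"
  shows "edge_form x + ((\<Prod>j\<in>e. y j) - (\<Prod>j\<in>e. x j)) \<le> edge_form y"
proof -
  have "(\<Sum>e'\<in>E-{e}. \<Prod>j\<in>e'. x j) \<le> (\<Sum>e'\<in>E-{e}. \<Prod>j\<in>e'. y j)"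
    by (intro sum_mono prod_mono) (use le in auto)
  thus ?thesis unfolding edge_form_def using finite_edges e by (simp add: sum.remove)
qed

lemma power_sum_fill_zeros:
  fixes \<delta> :: real
  assumes "Z \<subseteq> {..<n}" and "\<And>i. i \<in> Z \<Longrightarrow> x i = 0"
  shows "power_sum (\<lambda>i. if i \<in> Z then \<delta> else x i) = power_sum x + card Z * \<delta> ^ m"
proof -
  have "(if i \<in> Z then \<delta> else x i) ^ m = x i ^ m + (if i \<in> Z then \<delta> ^ m else 0)" for i
    using assms(2) m_ge_2 by auto
  hence "power_sum (\<lambda>i. if i \<in> Z then \<delta> else x i)
      = power_sum x + (\<Sum>i<n. if i \<in> Z then \<delta> ^ m else 0)"
    by (simp add: power_sum_def sum.distrib)
  also have "(\<Sum>i<n. if i \<in> Z then \<delta> ^ m else 0) = card Z * \<delta> ^ m"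
    using sum.inter_restrict[of "{..<n}" "\<lambda>_. \<delta> ^ m" Z] Int_absorb1[OF assms(1)] by simp
  finally show ?thesis .
qed

lemma maximizer_fill_zeros:
  fixes \<delta> :: real
  assumes x: "is_maximizer x" and "\<delta> > 0" and e: "e \<in> E"
  defines "Z \<equiv> {i. i < n \<and> x i = 0}"
  shows "(\<Prod>j\<in>e. if j \<in> Z then \<delta> else x j) - (\<Prod>j\<in>e. x j) \<le> edge_form x * card Z * \<delta> ^ m"
proof -
  have nonneg: "nonneg_vec x" and sum1: "power_sum x = 1"
    using x by (auto simp: is_maximizer_def mem_nonneg_sphere)
  define y where "y = (\<lambda>i. if i \<in> Z then \<delta> else x i)"
  have le: "0 \<le> x j \<and> x j \<le> y j" for j
    using nonneg \<open>\<delta> > 0\<close> by (auto simp: y_def Z_def nonneg_vec_def)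
  have "nonneg_vec y" using nonneg \<open>\<delta> > 0\<close> by (auto simp: y_def Z_def nonneg_vec_def)
  have "edge_form x + ((\<Prod>j\<in>e. y j) - (\<Prod>j\<in>e. x j)) \<le> edge_form y"
    by (rule edge_form_increase[OF _ e], rule le)
  also have "\<dots> \<le> edge_form x * power_sum y" using maximizer_bound[OF x \<open>nonneg_vec y\<close>] .
  also have "power_sum y = 1 + card Z * \<delta> ^ m"
  proof -
    have "Z \<subseteq> {..<n}" "\<And>i. i \<in> Z \<Longrightarrow> x i = 0" by (auto simp: Z_def)
    thus ?thesis unfolding y_def using power_sum_fill_zeros[of Z x \<delta>] sum1 by simp
  qed
  finally show ?thesis unfolding y_def by (simp add: distrib_left)
qed

text \<open>If the maximizer vanished somewhere, raising its zero entries to a small \<delta> would increase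
  the edge form by order \<delta>^k along an edge meeting the zeros in k < m vertices, while the
  power sum only grows by order \<delta>^m.\<close>
lemma maximizer_pos:
  assumes x: "is_maximizer x" and "i < n"
  shows "x i > 0"
proof (rule ccontr)
  assume "\<not> x i > 0"
  have nonneg: "nonneg_vec x" and sum1: "power_sum x = 1"
    using x by (auto simp: is_maximizer_def mem_nonneg_sphere)
  define Z where "Z = {i. i < n \<and> x i = 0}"
  have "i \<in> Z" using \<open>\<not> x i > 0\<close> \<open>i < n\<close> nonneg by (auto simp: Z_def nonneg_vec_def less_le)
  moreover obtain j where "j < n" "j \<notin> Z"
  proof -
    have "\<not> (\<forall>j<n. x j = 0)"
    proof
      assume "\<forall>j<n. x j = 0"
      hence "power_sum x = 0" using m_ge_2 by (simp add: power_sum_def)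
      thus False using sum1 by simp
    qed
    thus ?thesis using that by (auto simp: Z_def)
  qed
  ultimately obtain e a b where e: "e \<in> E" and ab: "a \<in> e" "b \<in> e" "a \<notin> Z" "b \<in> Z"
    using exists_crossing_edge[OF \<open>i < n\<close>] by blast
  define k where "k = card (e \<inter> Z)"
  have "e \<inter> Z \<subset> e" using ab by blast
  hence "k < m" unfolding k_def using psubset_card_mono[OF finite_edge[OF e]] card_edge[OF e] by simp
  define c where "c = (\<Prod>j\<in>e-Z. x j)"
  have "c > 0" unfolding c_def
  proof (rule prod_pos)
    fix j assume "j \<in> e - Z"
    thus "x j > 0" using nonneg edge_vertex_less[OF e] by (auto simp: Z_def nonneg_vec_def less_le)
  qed
  have "0 \<le> edge_form x * card Z" using edge_form_nonneg[OF nonneg] by simp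
  then obtain \<delta> :: real where \<delta>: "\<delta> > 0" "edge_form x * card Z * \<delta> ^ m < \<delta> ^ k * c"
    by (rule small_power_dominated[OF \<open>k < m\<close> \<open>c > 0\<close>])
  have "x b = 0" using ab(4) by (simp add: Z_def)
  hence "(\<Prod>j\<in>e. x j) = 0" using finite_edge[OF e] ab(2) prod_zero_iff by blast
  moreover have "(\<Prod>j\<in>e. if j \<in> Z then \<delta> else x j) = \<delta> ^ k * c"
  proof -
    have "(\<Prod>j\<in>e \<inter> Z. if j \<in> Z then \<delta> else x j) = (\<Prod>j\<in>e \<inter> Z. \<delta>)" by (rule prod.cong) auto
    moreover have "(\<Prod>j\<in>e - Z. if j \<in> Z then \<delta> else x j) = c" unfolding c_def by (rule prod.cong) auto
    ultimately show ?thesis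
      using prod.Int_Diff[OF finite_edge[OF e], of "\<lambda>j. if j \<in> Z then \<delta> else x j" Z] by (simp add: k_def)
  qed
  ultimately show False using maximizer_fill_zeros[OF x \<delta>(1) e] \<delta>(2) by (simp add: Z_def)
qed

lemma edge_form_update: "edge_form (x(i := x i + t)) = edge_form x + t * adj_apply E x i"
proof -
  have "(\<Prod>j\<in>e. (x(i := x i + t)) j) = (\<Prod>j\<in>e. x j) + (if i \<in> e then t * (\<Prod>j\<in>e-{i}. x j) else 0)"
    if e: "e \<in> E" for e
  proof (cases "i \<in> e")
    case True
    have "(\<Prod>j\<in>e-{i}. (x(i := x i + t)) j) = (\<Prod>j\<in>e-{i}. x j)" by (rule prod.cong) auto
    thus ?thesis using finite_edge[OF e] True by (simp add: prod.remove algebra_simps)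
  next
    case False
    thus ?thesis by (simp, intro prod.cong) auto
  qed
  hence "edge_form (x(i := x i + t)) = edge_form x + (\<Sum>e\<in>E. if i \<in> e then t * (\<Prod>j\<in>e-{i}. x j) else 0)"
    unfolding edge_form_def by (simp add: sum.distrib)
  also have "(\<Sum>e\<in>E. if i \<in> e then t * (\<Prod>j\<in>e-{i}. x j) else 0) = t * adj_apply E x i"
  proof -
    have "(\<Sum>e\<in>E. if i \<in> e then t * (\<Prod>j\<in>e-{i}. x j) else 0) = (\<Sum>e\<in>{e\<in>E. i \<in> e}. t * (\<Prod>j\<in>e-{i}. x j))"
      using finite_edges by (simp add: sum.inter_filter)
    thus ?thesis by (simp add: adj_apply_def sum_distrib_left)
  qed
  finally show ?thesis .
qed

lemma power_sum_update:
  assumes "i < n"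
  shows "power_sum (x(i := x i + t)) = power_sum x - x i ^ m + (x i + t) ^ m"
proof -
  have "(\<Sum>j\<in>{..<n}-{i}. (x(i := x i + t)) j ^ m) = (\<Sum>j\<in>{..<n}-{i}. x j ^ m)"
    by (rule sum.cong) auto
  thus ?thesis unfolding power_sum_def using assms by (simp add: sum.remove)
qed

text \<open>The maximizer is interior, so the derivative of edge_form - F power_sum vanishes there
  (F the maximum): this is the eigenvalue equation with eigenvalue m F.\<close>
lemma maximizer_eigen:
  assumes x: "is_maximizer x" and i: "i < n"
  shows "adj_apply E x i = (edge_form x * m) * x i ^ (m - 1)"
proof -
  have nonneg: "nonneg_vec x" and sum1: "power_sum x = 1"
    using x by (auto simp: is_maximizer_def mem_nonneg_sphere)
  define F where "F = edge_form x"
  define a where "a = adj_apply E x i"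
  define h where "h = (\<lambda>t. F * (power_sum x - x i ^ m + (x i + t) ^ m) - (F + t * a))"
  have min: "h 0 \<le> h t" if t: "\<bar>0 - t\<bar> < x i" for t
  proof -
    have "nonneg_vec (x(i := x i + t))" using nonneg t i by (auto simp: nonneg_vec_def)
    hence "edge_form (x(i := x i + t)) \<le> F * power_sum (x(i := x i + t))"
      using maximizer_bound[OF x] by (simp add: F_def)
    hence "F + t * a \<le> F * (power_sum x - x i ^ m + (x i + t) ^ m)"
      using edge_form_update[of x i t] power_sum_update[OF i, of x t] by (simp add: F_def a_def)
    thus ?thesis unfolding h_def using sum1 by simp
  qed
  have "(h has_real_derivative (F * (of_nat m * (x i + 0) ^ (m - 1) * 1) - (0 + 1 * a))) (at 0)"
    unfolding h_def by (intro derivative_eq_intros) auto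
  hence "F * (of_nat m * (x i + 0) ^ (m - 1) * 1) - (0 + 1 * a) = 0"
    using DERIV_local_min maximizer_pos[OF x i] min by blast
  thus ?thesis by (simp add: F_def a_def)
qed

definition is_perron_pair :: "(nat \<Rightarrow> real) \<Rightarrow> real \<Rightarrow> bool" where
  "is_perron_pair v r \<longleftrightarrow> (\<forall>i<n. v i > 0) \<and> (\<forall>i. n \<le> i \<longrightarrow> v i = 0) \<and> v 0 = 1 \<and> r \<ge> 0 \<and>
     (\<forall>i<n. adj_apply E v i = r * v i ^ (m - 1))"

lemma perron_pair_exists: "\<exists>v r. is_perron_pair v r"
proof -
  obtain x where x: "is_maximizer x" using maximizer_exists by blast
  have nonneg: "nonneg_vec x" using x by (simp add: is_maximizer_def mem_nonneg_sphere)
  have x0: "x 0 > 0" using maximizer_pos[OF x] n_pos by simp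
  define v where "v = (\<lambda>j. (1 / x 0) * x j)"
  have "adj_apply E v i = (edge_form x * m) * v i ^ (m - 1)" if "i < n" for i
    unfolding v_def adj_apply_scale_const maximizer_eigen[OF x that] by (simp add: power_divide)
  moreover have "edge_form x * m \<ge> 0" using edge_form_nonneg[OF nonneg] by simp
  ultimately have "is_perron_pair v (edge_form x * m)"
    using maximizer_pos[OF x] x0 nonneg by (simp add: is_perron_pair_def v_def nonneg_vec_def)
  thus ?thesis by blast
qed

definition perron_val :: real where
  "perron_val = (SOME r. \<exists>v. is_perron_pair v r)"

definition perron_vec :: "nat \<Rightarrow> real" where
  "perron_vec = (SOME v. is_perron_pair v perron_val)"

lemma is_perron_pair_perron: "is_perron_pair perron_vec perron_val"
proof -
  have "\<exists>v. is_perron_pair v perron_val"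
    unfolding perron_val_def
    by (rule someI_ex[where P = "\<lambda>r. \<exists>v. is_perron_pair v r"]) (use perron_pair_exists in blast)
  thus ?thesis unfolding perron_vec_def by (rule someI_ex)
qed

lemma perron_vec_pos: "i < n \<Longrightarrow> perron_vec i > 0"
  and perron_vec_outside: "n \<le> i \<Longrightarrow> perron_vec i = 0"
  and perron_vec_0: "perron_vec 0 = 1"
  and perron_val_nonneg: "perron_val \<ge> 0"
  and perron_eigen: "i < n \<Longrightarrow> adj_apply E perron_vec i = perron_val * perron_vec i ^ (m - 1)"
  using is_perron_pair_perron by (auto simp: is_perron_pair_def)

lemma perron_vec_nonneg: "perron_vec i \<ge> 0"
  using perron_vec_pos perron_vec_outside by (cases "i < n") (auto simp: less_imp_le)

section \<open>Eigenvectors for the spectral radius\<close>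

definition perron_cvec :: "nat \<Rightarrow> complex" where
  "perron_cvec = (\<lambda>i. complex_of_real (perron_vec i))"

lemma norm_perron_cvec: "cmod (perron_cvec i) = perron_vec i"
  using perron_vec_nonneg[of i] by (simp add: perron_cvec_def)

lemma perron_cvec_nonzero: "i < n \<Longrightarrow> perron_cvec i \<noteq> 0"
  using perron_vec_pos[of i] by (simp add: perron_cvec_def)

lemma perron_cvec_eigen:
  "i < n \<Longrightarrow> adj_apply E perron_cvec i = complex_of_real perron_val * perron_cvec i ^ (m - 1)"
  using adj_apply_of_real[of E perron_vec i] perron_eigen by (simp add: perron_cvec_def)

lemma eigenpair_perron_cvec: "eigenpair m n (adj_tensor m E) (complex_of_real perron_val) perron_cvec"
proof -
  have "perron_cvec 0 \<noteq> 0" using perron_cvec_nonzero n_pos by simp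
  moreover have "perron_cvec \<in> vecs n" using perron_vec_outside by (simp add: vecs_def perron_cvec_def)
  ultimately show ?thesis unfolding eigenpair_adj_tensor_iff using n_pos perron_cvec_eigen
    by (auto intro!: exI[of _ 0])
qed

lemma perron_edge_sum:
  "i < n \<Longrightarrow> (\<Sum>e\<in>{e\<in>E. i\<in>e}. \<Prod>j\<in>e-{i}. c * perron_vec j) = c ^ (m - 1) * (perron_val * perron_vec i ^ (m - 1))"
  using adj_apply_scale_const[of c perron_vec i] perron_eigen by (simp add: adj_apply_def)

lemma norm_edge_prod_le:
  assumes "e \<in> E" and dom: "\<And>j. j < n \<Longrightarrow> cmod (x j) \<le> c * perron_vec j"
  shows "cmod (\<Prod>j\<in>e-{i}. x j) \<le> (\<Prod>j\<in>e-{i}. c * perron_vec j)"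
  unfolding prod_norm[symmetric] by (rule prod_mono) (use dom edge_vertex_less[OF assms(1)] in auto)

lemma norm_adj_apply_le:
  assumes "i < n" and dom: "\<And>j. j < n \<Longrightarrow> cmod (x j) \<le> c * perron_vec j"
  shows "cmod (adj_apply E x i) \<le> c ^ (m - 1) * (perron_val * perron_vec i ^ (m - 1))"
proof -
  have "cmod (adj_apply E x i) \<le> (\<Sum>e\<in>{e\<in>E. i\<in>e}. cmod (\<Prod>j\<in>e-{i}. x j))"
    unfolding adj_apply_def by (rule norm_sum)
  also have "\<dots> \<le> (\<Sum>e\<in>{e\<in>E. i\<in>e}. \<Prod>j\<in>e-{i}. c * perron_vec j)"
    using norm_edge_prod_le[OF _ dom] by (intro sum_mono) auto
  finally show ?thesis using perron_edge_sum[OF assms(1)] by simp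
qed

lemma norm_adj_apply_eq_imp:
  assumes "i < n" and dom: "\<And>j. j < n \<Longrightarrow> cmod (x j) \<le> c * perron_vec j"
    and eq: "cmod (adj_apply E x i) = c ^ (m - 1) * (perron_val * perron_vec i ^ (m - 1))"
    and "c > 0" and e: "e \<in> E" "i \<in> e" and j: "j \<in> e - {i}"
  shows "cmod (x j) = c * perron_vec j"
proof -
  let ?S = "{e\<in>E. i\<in>e}"
  have "(\<Sum>e\<in>?S. \<Prod>j\<in>e-{i}. c * perron_vec j) \<le> (\<Sum>e\<in>?S. cmod (\<Prod>j\<in>e-{i}. x j))"
    using eq perron_edge_sum[OF assms(1)] norm_sum[of "\<lambda>e. \<Prod>j\<in>e-{i}. x j" ?S]
    by (simp add: adj_apply_def)
  moreover have "(\<Sum>e\<in>?S. cmod (\<Prod>j\<in>e-{i}. x j)) \<le> (\<Sum>e\<in>?S. \<Prod>j\<in>e-{i}. c * perron_vec j)"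
    using norm_edge_prod_le[OF _ dom] by (intro sum_mono) auto
  ultimately have "(\<Sum>e\<in>?S. cmod (\<Prod>j\<in>e-{i}. x j)) = (\<Sum>e\<in>?S. \<Prod>j\<in>e-{i}. c * perron_vec j)"
    by (rule antisym[rotated])
  hence "cmod (\<Prod>j\<in>e-{i}. x j) = (\<Prod>j\<in>e-{i}. c * perron_vec j)"
    by (rule sum_mono_inv) (use norm_edge_prod_le[OF _ dom] e finite_edges in auto)
  hence prods: "(\<Prod>j\<in>e-{i}. cmod (x j)) = (\<Prod>j\<in>e-{i}. c * perron_vec j)" by (simp add: prod_norm)
  show ?thesis
    by (rule prod_mono_eq_imp_eq[where f = "\<lambda>j. cmod (x j)" and g = "\<lambda>j. c * perron_vec j",
          OF _ _ _ prods j])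
      (use finite_edge[OF e(1)] dom edge_vertex_less[OF e(1)] perron_vec_pos \<open>c > 0\<close> in auto)
qed

lemma exists_tight_bound:
  fixes x :: "nat \<Rightarrow> complex"
  assumes "\<exists>i<n. x i \<noteq> 0"
  obtains c i0 where "c > 0" "i0 < n" "\<And>j. j < n \<Longrightarrow> cmod (x j) \<le> c * perron_vec j"
    "cmod (x i0) = c * perron_vec i0"
proof -
  define q where "q = (\<lambda>j. cmod (x j) / perron_vec j)"
  define c where "c = Max (q ` {..<n})"
  have "c \<in> q ` {..<n}" unfolding c_def using n_pos by (intro Max_in) (simp_all add: lessThan_empty_iff)
  then obtain i0 where i0: "i0 < n" "q i0 = c" by auto
  have dom: "cmod (x j) \<le> c * perron_vec j" if "j < n" for j
    using Max_ge[of "q ` {..<n}" "q j"] that perron_vec_pos[OF that]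
    unfolding c_def q_def by (simp add: divide_le_eq)
  obtain k where k: "k < n" "x k \<noteq> 0" using assms by blast
  have "0 < c * perron_vec k" using dom[OF k(1)] k(2) by (smt (verit) zero_less_norm_iff)
  hence "c > 0" using perron_vec_pos[OF k(1)] by (simp add: zero_less_mult_iff)
  moreover have "cmod (x i0) = c * perron_vec i0" using i0 perron_vec_pos[OF i0(1)] by (simp add: q_def field_simps)
  ultimately show ?thesis using that i0(1) dom by blast
qed

lemma eigenvalue_norm_le:
  assumes "eigenpair m n (adj_tensor m E) lam x"
  shows "cmod lam \<le> perron_val"
proof -
  have nz: "\<exists>i<n. x i \<noteq> 0" and eq: "\<And>i. i < n \<Longrightarrow> adj_apply E x i = lam * x i ^ (m - 1)"
    using assms unfolding eigenpair_adj_tensor_iff by auto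
  obtain c i0 where c: "c > 0" and i0: "i0 < n" and dom: "\<And>j. j < n \<Longrightarrow> cmod (x j) \<le> c * perron_vec j"
      and tight: "cmod (x i0) = c * perron_vec i0"
    using exists_tight_bound[OF nz] by blast
  have "cmod lam * cmod (x i0) ^ (m - 1) = cmod (adj_apply E x i0)"
    using eq[OF i0] by (simp add: norm_mult norm_power)
  also have "\<dots> \<le> c ^ (m - 1) * (perron_val * perron_vec i0 ^ (m - 1))"
    by (rule norm_adj_apply_le[OF i0 dom])
  also have "\<dots> = perron_val * cmod (x i0) ^ (m - 1)" using tight by (simp add: power_mult_distrib)
  finally show ?thesis using tight c perron_vec_pos[OF i0] by simp
qed

lemma spectral_radius_adj_tensor: "tensor_spectral_radius m n (adj_tensor m E) = perron_val"
  unfolding tensor_spectral_radius_def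
proof (rule cSup_eq_maximum)
  show "perron_val \<in> {cmod lam |lam. \<exists>x. eigenpair m n (adj_tensor m E) lam x}"
    using eigenpair_perron_cvec perron_val_nonneg by force
qed (use eigenvalue_norm_le in blast)

lemma rho_eigvecs_adj_tensor:
  "y \<in> rho_eigvecs m n (adj_tensor m E) \<longleftrightarrow> y \<in> vecs n \<and> y 0 = 1 \<and> (\<forall>i<n. y i \<noteq> 0) \<and>
     (\<forall>i<n. adj_apply E y i = complex_of_real perron_val * y i ^ (m - 1))"
proof -
  have "0 < n" using n_pos by simp
  thus ?thesis unfolding rho_eigvecs_def spectral_radius_adj_tensor eigenpair_adj_tensor_iff by blast
qed

text \<open>Equality must hold in the triangle inequality bound at a vertex where the bound is tight,
  and connectivity spreads this to every vertex.\<close>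
lemma rho_eigvec_norm:
  assumes y: "y \<in> rho_eigvecs m n (adj_tensor m E)" and "j < n"
  shows "cmod (y j) = perron_vec j"
proof -
  have y0: "y 0 = 1" and nz: "\<exists>i<n. y i \<noteq> 0"
    and eq: "\<And>i. i < n \<Longrightarrow> adj_apply E y i = complex_of_real perron_val * y i ^ (m - 1)"
    using y n_pos unfolding rho_eigvecs_adj_tensor by (auto intro!: exI[of _ 0])
  obtain c i0 where c: "c > 0" and i0: "i0 < n" and dom: "\<And>j. j < n \<Longrightarrow> cmod (y j) \<le> c * perron_vec j"
      and tight: "cmod (y i0) = c * perron_vec i0"
    using exists_tight_bound[OF nz] by blast
  have step: "cmod (y b) = c * perron_vec b"
    if e: "e \<in> E" "a \<in> e" "b \<in> e" and tight_a: "cmod (y a) = c * perron_vec a" for e a b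
  proof (cases "b = a")
    case False
    have a: "a < n" using edge_vertex_less e by blast
    have "cmod (adj_apply E y a) = c ^ (m - 1) * (perron_val * perron_vec a ^ (m - 1))"
      using eq[OF a] perron_val_nonneg tight_a by (simp add: norm_mult norm_power power_mult_distrib)
    thus ?thesis using norm_adj_apply_eq_imp[OF a dom _ c e(1,2)] e(3) False by simp
  qed (use tight_a in simp)
  have all: "cmod (y j) = c * perron_vec j" if "j < n" for j
    by (rule connected_propagate[where P = "\<lambda>j. cmod (y j) = c * perron_vec j", OF step i0 tight that])
  moreover have "c = 1" using all[of 0] n_pos y0 perron_vec_0 by simp
  ultimately show ?thesis using \<open>j < n\<close> by simp
qed

lemma norm_root_labelling: "d \<in> root_labellings \<Longrightarrow> i < n \<Longrightarrow> cmod (d i) = 1"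
  using power_eq_1_iff[of "d i" m] m_ge_2 by (auto simp: root_labellings_def)

text \<open>twist d is D v_p for the diagonal matrix D with diagonal d.\<close>
definition twist :: "(nat \<Rightarrow> complex) \<Rightarrow> nat \<Rightarrow> complex" where
  "twist d = (\<lambda>i. d i * perron_cvec i)"

lemma adj_apply_twist:
  assumes "edge_balanced d" and "i < n"
  shows "adj_apply E (twist d) i = complex_of_real perron_val * twist d i ^ (m - 1)"
proof -
  have "adj_apply E (twist d) i = (\<Sum>e\<in>{e\<in>E. i\<in>e}. d i ^ (m - 1) * (\<Prod>j\<in>e-{i}. perron_cvec j))"
    unfolding twist_def adj_apply_scale using assms(1) by (intro sum.cong) (auto simp: edge_balanced_def)
  also have "\<dots> = d i ^ (m - 1) * adj_apply E perron_cvec i" by (simp add: adj_apply_def sum_distrib_left)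
  finally show ?thesis using perron_cvec_eigen[OF assms(2)] by (simp add: twist_def power_mult_distrib)
qed

lemma twist_mem_rho_eigvecs:
  assumes d: "d \<in> stab_set"
  shows "twist d \<in> rho_eigvecs m n (adj_tensor m E)"
proof -
  have root: "d \<in> root_labellings" and d0: "d 0 = 1" using d by (auto simp: stab_set_def)
  have nz: "\<forall>i<n. d i \<noteq> 0" using root_labellings_nonzero[OF root] by blast
  hence "edge_balanced d"
    using edge_balanced_iff_root_labelling[OF nz d0] root by (simp add: root_labellings_def)
  moreover have "twist d \<in> vecs n" using root by (simp add: twist_def root_labellings_def vecs_def)
  moreover have "\<forall>i<n. twist d i \<noteq> 0"
    using root_labellings_nonzero[OF root] perron_cvec_nonzero by (simp add: twist_def)
  ultimately show ?thesis
    using adj_apply_twist d0 perron_vec_0 by (simp add: rho_eigvecs_adj_tensor twist_def perron_cvec_def)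
qed

text \<open>Around each vertex i the products over the edges through i sum, with their moduli, to the
  modulus of the sum; so they all have the phase of d_i^(m-1).\<close>
lemma unimodular_twist_eigvec_balanced:
  assumes norm: "\<And>j. j < n \<Longrightarrow> cmod (d j) = 1"
    and eig: "\<And>i. i < n \<Longrightarrow> adj_apply E (twist d) i = complex_of_real perron_val * twist d i ^ (m - 1)"
  shows "edge_balanced d"
  unfolding edge_balanced_def
proof (intro ballI)
  fix e i assume e: "e \<in> E" and "i \<in> e"
  hence i: "i < n" using edge_vertex_less by blast
  let ?S = "{e\<in>E. i\<in>e}"
  define u where "u = d i ^ (m - 1)"
  have prod_twist: "(\<Prod>j\<in>e'-{i}. twist d j) = (\<Prod>j\<in>e'-{i}. d j) * complex_of_real (\<Prod>j\<in>e'-{i}. perron_vec j)"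
    for e' by (simp add: twist_def prod.distrib perron_cvec_def)
  have norm_prod: "cmod (\<Prod>j\<in>e'-{i}. twist d j) = (\<Prod>j\<in>e'-{i}. perron_vec j)" if "e' \<in> ?S" for e'
    using that norm edge_vertex_less perron_vec_nonneg
    by (auto simp: prod_twist norm_mult prod_norm[symmetric] intro!: prod.neutral)
  have sum_eq: "(\<Sum>e'\<in>?S. \<Prod>j\<in>e'-{i}. twist d j) = complex_of_real (perron_val * perron_vec i ^ (m - 1)) * u"
    using eig[OF i] by (simp add: adj_apply_def twist_def perron_cvec_def u_def power_mult_distrib)
  have norm_eq: "(\<Sum>e'\<in>?S. cmod (\<Prod>j\<in>e'-{i}. twist d j)) = perron_val * perron_vec i ^ (m - 1)"
    using perron_eigen[OF i] norm_prod by (simp add: adj_apply_def)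
  have "(\<Prod>j\<in>e-{i}. twist d j) = complex_of_real (cmod (\<Prod>j\<in>e-{i}. twist d j)) * u"
    by (rule sum_norm_eq_imp_aligned[OF _ sum_eq _ norm_eq])
      (use norm[OF i] e \<open>i \<in> e\<close> finite_edges in \<open>simp_all add: u_def norm_power\<close>)
  moreover have "(\<Prod>j\<in>e-{i}. perron_vec j) > 0"
    using edge_vertex_less[OF e] perron_vec_pos by (intro prod_pos) auto
  ultimately show "(\<Prod>j\<in>e-{i}. d j) = d i ^ (m - 1)"
    using norm_prod[of e] e \<open>i \<in> e\<close> by (simp add: prod_twist u_def del: of_real_prod)
qed

lemma rho_eigvec_eq_twist:
  assumes y: "y \<in> rho_eigvecs m n (adj_tensor m E)"
  shows "\<exists>d\<in>stab_set. y = twist d"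
proof -
  have yv: "y \<in> vecs n" and y0: "y 0 = 1"
    and eig: "\<And>i. i < n \<Longrightarrow> adj_apply E y i = complex_of_real perron_val * y i ^ (m - 1)"
    using y unfolding rho_eigvecs_adj_tensor by auto
  define d where "d = (\<lambda>j. if j < n then y j / perron_cvec j else 0)"
  have norm: "cmod (d j) = 1" if "j < n" for j
    using rho_eigvec_norm[OF y that] perron_vec_pos[OF that] that
    by (simp add: d_def norm_divide norm_perron_cvec)
  have "y = twist d" using yv perron_cvec_nonzero by (auto simp: d_def twist_def vecs_def)
  hence "edge_balanced d" using unimodular_twist_eigvec_balanced norm eig by simp
  moreover have "\<forall>i<n. d i \<noteq> 0" and "d 0 = 1"
    using norm n_pos y0 by (force, simp add: d_def perron_cvec_def perron_vec_0)
  ultimately have "d \<in> stab_set"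
    using edge_balanced_iff_root_labelling by (auto simp: stab_set_def root_labellings_def vecs_def d_def)
  thus ?thesis using \<open>y = twist d\<close> by blast
qed

lemma rho_eigvecs_eq_twist_image: "rho_eigvecs m n (adj_tensor m E) = twist ` stab_set"
  using twist_mem_rho_eigvecs rho_eigvec_eq_twist by blast

section \<open>The stabilizing module\<close>

abbreviation stab_mod :: "(nat \<Rightarrow> complex) monoid" where
  "stab_mod \<equiv> stab_module m n (adj_tensor m E)"

definition unit_labelling :: "nat \<Rightarrow> complex" where
  "unit_labelling = (\<lambda>i. if i < n then 1 else 0)"

lemma stab_set_root_labelling: "d \<in> stab_set \<Longrightarrow> d \<in> root_labellings"
  by (simp add: stab_set_def)

lemma unit_labelling_mem: "unit_labelling \<in> stab_set"
proof -
  have "(\<Prod>j\<in>e. unit_labelling j) = 1" if "e \<in> E" for e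
    using edge_vertex_less[OF that] by (intro prod.neutral) (simp add: unit_labelling_def)
  thus ?thesis using n_pos by (auto simp: stab_set_def root_labellings_def unit_labelling_def vecs_def)
qed

lemma stab_set_mult: "d \<in> stab_set \<Longrightarrow> d' \<in> stab_set \<Longrightarrow> (\<lambda>i. d i * d' i) \<in> stab_set"
  by (auto simp: stab_set_def root_labellings_def vecs_def power_mult_distrib prod.distrib)

lemma stab_set_inverse: "d \<in> stab_set \<Longrightarrow> (\<lambda>i. inverse (d i)) \<in> stab_set"
  using prod_inversef[of d] by (auto simp: stab_set_def root_labellings_def vecs_def power_inverse comp_def)

lemma stab_set_unit_mult: "d \<in> stab_set \<Longrightarrow> (\<lambda>i. unit_labelling i * d i) = d"
  using root_labellings_outside stab_set_root_labelling by (auto simp: unit_labelling_def)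

lemma stab_set_inverse_mult: "d \<in> stab_set \<Longrightarrow> (\<lambda>i. inverse (d i) * d i) = unit_labelling"
  using root_labellings_outside root_labellings_nonzero stab_set_root_labelling
  by (auto simp: unit_labelling_def)

lemma twist_unit_labelling: "twist unit_labelling = perron_cvec"
  using perron_vec_outside by (auto simp: twist_def unit_labelling_def perron_cvec_def)

lemma twist_inj: "inj_on twist stab_set"
proof (rule inj_onI)
  fix d d' assume d: "d \<in> stab_set" and d': "d' \<in> stab_set" and eq: "twist d = twist d'"
  show "d = d'"
  proof
    fix i show "d i = d' i"
      using fun_cong[OF eq, of i] perron_cvec_nonzero[of i] root_labellings_outside[of d i]
        root_labellings_outside[of d' i] d d'
      by (cases "i < n") (auto simp: twist_def stab_set_def)
  qed
qed

lemma phase_twist: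
  assumes "d \<in> stab_set"
  shows "twist d i / complex_of_real (cmod (twist d i)) = (if i < n then d i else 0)"
  using assms norm_root_labelling[of d i] perron_vec_pos[of i] root_labellings_outside[of d i]
  by (auto simp: twist_def norm_mult norm_perron_cvec stab_set_def perron_cvec_def)

lemma pos_eigvec_adj_tensor: "pos_eigvec m n (adj_tensor m E) = perron_cvec"
  unfolding pos_eigvec_def
proof (rule the_equality)
  show "perron_cvec \<in> rho_eigvecs m n (adj_tensor m E) \<and> (\<forall>i<n. perron_cvec i \<in> \<real> \<and> Re (perron_cvec i) > 0)"
    using twist_mem_rho_eigvecs[OF unit_labelling_mem] perron_vec_pos
    by (simp add: twist_unit_labelling perron_cvec_def)
next
  fix v assume v: "v \<in> rho_eigvecs m n (adj_tensor m E) \<and> (\<forall>i<n. v i \<in> \<real> \<and> Re (v i) > 0)"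
  show "v = perron_cvec"
  proof
    fix i show "v i = perron_cvec i"
    proof (cases "i < n")
      case True
      have "v i = complex_of_real (cmod (v i))"
        using v True by (metis Reals_cases Re_complex_of_real abs_of_pos norm_of_real)
      thus ?thesis using rho_eigvec_norm[OF conjunct1[OF v] True] by (simp add: perron_cvec_def)
    next
      case False
      thus ?thesis using v perron_vec_outside
        by (simp add: rho_eigvecs_adj_tensor vecs_def perron_cvec_def)
    qed
  qed
qed

lemma carrier_stab_mod: "carrier stab_mod = twist ` stab_set"
  by (simp add: stab_module_def rho_eigvecs_eq_twist_image)

lemma one_stab_mod: "\<one>\<^bsub>stab_mod\<^esub> = twist unit_labelling"
  by (simp add: stab_module_def pos_eigvec_adj_tensor twist_unit_labelling)

lemma mult_stab_mod:
  assumes "d \<in> stab_set" and "d' \<in> stab_set"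
  shows "twist d \<otimes>\<^bsub>stab_mod\<^esub> twist d' = twist (\<lambda>i. d i * d' i)"
proof
  fix i
  have "(twist d \<otimes>\<^bsub>stab_mod\<^esub> twist d') i = (twist d i / complex_of_real (cmod (twist d i))) *
      (twist d' i / complex_of_real (cmod (twist d' i))) * perron_cvec i"
    by (simp add: stab_module_def pos_eigvec_adj_tensor)
  also have "\<dots> = twist (\<lambda>i. d i * d' i) i"
    unfolding phase_twist[OF assms(1)] phase_twist[OF assms(2)] using perron_vec_outside[of i]
    by (cases "i < n") (simp_all add: twist_def perron_cvec_def)
  finally show "(twist d \<otimes>\<^bsub>stab_mod\<^esub> twist d') i = twist (\<lambda>i. d i * d' i) i" .
qed

lemma group_stab_mod: "group stab_mod"
proof (rule groupI)
  fix x y assume "x \<in> carrier stab_mod" "y \<in> carrier stab_mod"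
  thus "x \<otimes>\<^bsub>stab_mod\<^esub> y \<in> carrier stab_mod"
    using mult_stab_mod stab_set_mult by (auto simp: carrier_stab_mod)
next
  show "\<one>\<^bsub>stab_mod\<^esub> \<in> carrier stab_mod"
    using unit_labelling_mem by (simp add: carrier_stab_mod one_stab_mod)
next
  fix x y z assume "x \<in> carrier stab_mod" "y \<in> carrier stab_mod" "z \<in> carrier stab_mod"
  thus "x \<otimes>\<^bsub>stab_mod\<^esub> y \<otimes>\<^bsub>stab_mod\<^esub> z = x \<otimes>\<^bsub>stab_mod\<^esub> (y \<otimes>\<^bsub>stab_mod\<^esub> z)"
    using mult_stab_mod stab_set_mult by (auto simp: carrier_stab_mod mult.assoc)
next
  fix x assume "x \<in> carrier stab_mod"
  thus "\<one>\<^bsub>stab_mod\<^esub> \<otimes>\<^bsub>stab_mod\<^esub> x = x"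
    using mult_stab_mod unit_labelling_mem stab_set_unit_mult by (auto simp: carrier_stab_mod one_stab_mod)
next
  fix x assume "x \<in> carrier stab_mod"
  then obtain d where d: "d \<in> stab_set" "x = twist d" by (auto simp: carrier_stab_mod)
  hence "twist (\<lambda>i. inverse (d i)) \<otimes>\<^bsub>stab_mod\<^esub> x = \<one>\<^bsub>stab_mod\<^esub>"
    using mult_stab_mod[OF stab_set_inverse[OF d(1)] d(1)] stab_set_inverse_mult[OF d(1)]
    by (simp add: one_stab_mod)
  thus "\<exists>y\<in>carrier stab_mod. y \<otimes>\<^bsub>stab_mod\<^esub> x = \<one>\<^bsub>stab_mod\<^esub>"
    using stab_set_inverse[OF d(1)] by (auto simp: carrier_stab_mod)
qed

lemma inv_stab_mod:
  assumes "d \<in> stab_set"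
  shows "inv\<^bsub>stab_mod\<^esub> (twist d) = twist (\<lambda>i. inverse (d i))"
proof (rule group.inv_equality[OF group_stab_mod])
  show "twist (\<lambda>i. inverse (d i)) \<otimes>\<^bsub>stab_mod\<^esub> twist d = \<one>\<^bsub>stab_mod\<^esub>"
    using mult_stab_mod[OF stab_set_inverse[OF assms] assms] stab_set_inverse_mult[OF assms]
    by (simp add: one_stab_mod)
qed (use assms stab_set_inverse[OF assms] in \<open>auto simp: carrier_stab_mod\<close>)

lemma card_stab_mod: "card (carrier stab_mod) = card stab_set"
  using card_image[OF twist_inj] by (simp add: carrier_stab_mod)

end

section \<open>Cored hypergraphs\<close>

locale connected_cored_hypergraph = connected_uniform_hypergraph +
  assumes cored: "cored E"
begin

definition core_vertex :: "nat set \<Rightarrow> nat" where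
  "core_vertex e = (SOME v. v \<in> e \<and> hg_degree E v = 1)"

lemma core_vertex:
  assumes "e \<in> E"
  shows "core_vertex e \<in> e" and "\<And>e'. e' \<in> E \<Longrightarrow> core_vertex e \<in> e' \<Longrightarrow> e' = e"
proof -
  have "\<exists>v. v \<in> e \<and> hg_degree E v = 1" using cored assms by (auto simp: cored_def)
  hence deg: "core_vertex e \<in> e \<and> hg_degree E (core_vertex e) = 1" unfolding core_vertex_def by (rule someI_ex)
  then obtain e0 where e0: "{e'\<in>E. core_vertex e \<in> e'} = {e0}"
    by (auto simp: hg_degree_def card_1_singleton_iff)
  show "core_vertex e \<in> e" using deg by simp
  fix e' assume "e' \<in> E" "core_vertex e \<in> e'"
  hence "e' \<in> {e0}" "e \<in> {e0}" using e0 deg assms by (blast, blast)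
  thus "e' = e" by simp
qed

lemma core_vertex_less: "e \<in> E \<Longrightarrow> core_vertex e < n"
  using core_vertex(1) edge_vertex_less by blast

lemma inj_core_vertex: "inj_on core_vertex E"
proof (rule inj_onI)
  fix e e' assume "e \<in> E" "e' \<in> E" "core_vertex e = core_vertex e'"
  thus "e = e'" using core_vertex(1)[of e'] core_vertex(2)[of e e'] by simp
qed

definition free_vertices :: "nat set" where
  "free_vertices = {..<n} - core_vertex ` E"

lemma card_free_vertices: "card free_vertices = n - card E"
proof -
  have "core_vertex ` E \<subseteq> {..<n}" using core_vertex_less by blast
  thus ?thesis unfolding free_vertices_def
    using card_Diff_subset[of "core_vertex ` E" "{..<n}"] card_image[OF inj_core_vertex]
    by (simp add: finite_subset)
qed

lemma edge_free_vertex: "e \<in> E \<Longrightarrow> j \<in> e \<Longrightarrow> j \<noteq> core_vertex e \<Longrightarrow> j \<in> free_vertices"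
  unfolding free_vertices_def using edge_vertex_less core_vertex by blast

lemma free_vertices_nonempty: "free_vertices \<noteq> {}"
proof (cases "E = {}")
  case True
  thus ?thesis using n_pos unfolding free_vertices_def by (auto simp: lessThan_empty_iff)
next
  case False
  then obtain e where e: "e \<in> E" by blast
  have "card e \<ge> 2" using card_edge[OF e] m_ge_2 by simp
  then obtain a b where "a \<in> e" "b \<in> e" "a \<noteq> b"
    by (metis card_le_Suc_iff numeral_2_eq_2 Suc_le_D insertCI)
  thus ?thesis using edge_free_vertex[OF e] by blast
qed

definition base_vertex :: nat where
  "base_vertex = Min free_vertices"

lemma base_vertex_free: "base_vertex \<in> free_vertices"
  unfolding base_vertex_def by (rule Min_in[OF _ free_vertices_nonempty]) (simp add: free_vertices_def)

lemma base_vertex_less: "base_vertex < n"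
  using base_vertex_free by (simp add: free_vertices_def)

text \<open>The value at a core vertex is forced by the values on the rest of its edge.\<close>
lemma root_labelling_eq_on_free:
  assumes d: "d \<in> root_labellings" and d': "d' \<in> root_labellings"
    and eq: "\<And>j. j \<in> free_vertices \<Longrightarrow> d j = d' j"
  shows "d = d'"
proof
  fix i show "d i = d' i"
  proof (cases "i \<in> core_vertex ` E")
    case True
    then obtain e where e: "e \<in> E" and i: "i = core_vertex e" by blast
    have rest: "(\<Prod>j\<in>e-{i}. d j) = (\<Prod>j\<in>e-{i}. d' j)"
      using eq edge_free_vertex[OF e] i by (intro prod.cong) auto
    have "d i * (\<Prod>j\<in>e-{i}. d j) = 1" "d' i * (\<Prod>j\<in>e-{i}. d' j) = 1"
      using d d' e core_vertex(1)[OF e] finite_edge[OF e] i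
      by (auto simp: root_labellings_def prod.remove[symmetric])
    thus ?thesis using rest by (metis mult_cancel_right mult_zero_right zero_neq_one)
  next
    case False
    show ?thesis
    proof (cases "i < n")
      case True
      thus ?thesis using False eq by (simp add: free_vertices_def)
    qed (use root_labellings_outside[OF d] root_labellings_outside[OF d'] in simp)
  qed
qed

definition edge_of_core :: "nat \<Rightarrow> nat set" where
  "edge_of_core i = (THE e. e \<in> E \<and> core_vertex e = i)"

lemma edge_of_core: "e \<in> E \<Longrightarrow> edge_of_core (core_vertex e) = e"
  unfolding edge_of_core_def by (rule the_equality) (use inj_core_vertex in \<open>auto simp: inj_on_def\<close>)

definition extend_free :: "(nat \<Rightarrow> complex) \<Rightarrow> nat \<Rightarrow> complex" where
  "extend_free g = (\<lambda>i. if i \<in> free_vertices then g i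
     else if i < n then inverse (\<Prod>j\<in>edge_of_core i - {i}. g j) else 0)"

lemma extend_free:
  assumes g: "\<And>j. j \<in> free_vertices \<Longrightarrow> g j ^ m = 1"
  shows "extend_free g \<in> root_labellings" and "\<And>j. j \<in> free_vertices \<Longrightarrow> extend_free g j = g j"
proof -
  show "\<And>j. j \<in> free_vertices \<Longrightarrow> extend_free g j = g j" by (simp add: extend_free_def)
  have rest_root: "(\<Prod>j\<in>e - {core_vertex e}. g j) ^ m = 1" if e: "e \<in> E" for e
    unfolding prod_power_distrib using g edge_free_vertex[OF e] by (intro prod.neutral) auto
  have core: "extend_free g (core_vertex e) = inverse (\<Prod>j\<in>e - {core_vertex e}. g j)" if e: "e \<in> E" for e
    using e core_vertex_less[OF e] edge_of_core[OF e] by (auto simp: extend_free_def free_vertices_def)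
  have "extend_free g i ^ m = 1" if i: "i < n" for i
  proof (cases "i \<in> free_vertices")
    case False
    then obtain e where "e \<in> E" "i = core_vertex e" using i by (auto simp: free_vertices_def)
    thus ?thesis using core rest_root by (simp add: power_inverse)
  qed (use g in \<open>simp add: extend_free_def\<close>)
  moreover have "(\<Prod>j\<in>e. extend_free g j) = 1" if e: "e \<in> E" for e
  proof -
    have "(\<Prod>j\<in>e - {core_vertex e}. extend_free g j) = (\<Prod>j\<in>e - {core_vertex e}. g j)"
      using edge_free_vertex[OF e] by (intro prod.cong) (auto simp: extend_free_def)
    moreover have "(\<Prod>j\<in>e - {core_vertex e}. g j) \<noteq> 0"
      using power_m_eq_1_imp_nonzero[OF rest_root[OF e]] .
    ultimately show ?thesis using core[OF e] finite_edge[OF e] core_vertex(1)[OF e] by (simp add: prod.remove)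
  qed
  moreover have "extend_free g \<in> vecs n" by (simp add: vecs_def extend_free_def free_vertices_def)
  ultimately show "extend_free g \<in> root_labellings" by (simp add: root_labellings_def)
qed

lemma root_labellings_scale: "d \<in> root_labellings \<Longrightarrow> c ^ m = 1 \<Longrightarrow> (\<lambda>i. c * d i) \<in> root_labellings"
  by (simp add: root_labellings_def vecs_def power_mult_distrib prod.distrib card_edge)

definition free_coords :: "(nat \<Rightarrow> complex) \<Rightarrow> nat \<Rightarrow> complex" where
  "free_coords d = restrict (\<lambda>k. d k / d base_vertex) (free_vertices - {base_vertex})"

lemma free_coords_mem: "d \<in> stab_set \<Longrightarrow> free_coords d \<in> (free_vertices - {base_vertex}) \<rightarrow>\<^sub>E {z. z ^ m = 1}"
  using base_vertex_less by (auto simp: free_coords_def stab_set_def root_labellings_def free_vertices_def power_divide)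

text \<open>Two normalized labellings with the same ratios on the free vertices differ by a root of
  unity c, which the normalization at vertex 0 forces to be 1.\<close>
lemma inj_free_coords: "inj_on free_coords stab_set"
proof (rule inj_onI)
  fix d d' assume d: "d \<in> stab_set" and d': "d' \<in> stab_set" and eq: "free_coords d = free_coords d'"
  have root: "d \<in> root_labellings" "d' \<in> root_labellings" using d d' by (simp_all add: stab_set_def)
  have nz: "d base_vertex \<noteq> 0" "d' base_vertex \<noteq> 0"
    using root_labellings_nonzero[OF _ base_vertex_less] root by auto
  define c where "c = d' base_vertex / d base_vertex"
  have "c ^ m = 1" using root base_vertex_less by (simp add: c_def root_labellings_def power_divide)
  have "(\<lambda>i. c * d i) = d'"
  proof (rule root_labelling_eq_on_free[OF root_labellings_scale[OF root(1) \<open>c ^ m = 1\<close>] root(2)])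
    fix j assume "j \<in> free_vertices"
    thus "c * d j = d' j"
      using fun_cong[OF eq, of j] nz by (cases "j = base_vertex") (auto simp: c_def free_coords_def field_simps)
  qed
  moreover have "d 0 = 1" "d' 0 = 1" using d d' by (simp_all add: stab_set_def)
  ultimately have "c = 1" by (metis mult.right_neutral)
  thus "d = d'" using \<open>(\<lambda>i. c * d i) = d'\<close> by simp
qed

lemma free_coords_surj:
  assumes g: "g \<in> (free_vertices - {base_vertex}) \<rightarrow>\<^sub>E {z. z ^ m = 1}"
  obtains d where "d \<in> stab_set" and "free_coords d = g"
proof -
  define h where "h = g(base_vertex := 1)"
  have "h j ^ m = 1" if "j \<in> free_vertices" for j using g that by (auto simp: h_def)
  note ext = extend_free[of h, OF this]
  define a where "a = extend_free h 0"
  have a: "a \<noteq> 0" "a ^ m = 1"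
    using root_labellings_nonzero[OF ext(1)] ext(1) n_pos by (auto simp: a_def root_labellings_def)
  define d where "d = (\<lambda>i. inverse a * extend_free h i)"
  have "d \<in> stab_set"
    using root_labellings_scale[OF ext(1), where c = "inverse a"] a by (simp add: stab_set_def d_def power_inverse a_def)
  moreover have "free_coords d = g"
  proof
    fix k show "free_coords d k = g k"
    proof (cases "k \<in> free_vertices - {base_vertex}")
      case True
      have "extend_free h k = g k" "extend_free h base_vertex = 1"
        using ext(2) True base_vertex_free by (auto simp: h_def)
      thus ?thesis using True a(1) by (simp add: free_coords_def d_def)
    next
      case False
      thus ?thesis by (simp only: free_coords_def restrict_apply if_not_P[OF False] if_False PiE_arb[OF g False])
    qed
  qed
  ultimately show ?thesis using that by blast
qed

lemma card_stab_set: "card stab_set = m ^ (n - 1 - card E)"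
proof -
  have "free_coords ` stab_set = (free_vertices - {base_vertex}) \<rightarrow>\<^sub>E {z. z ^ m = 1}"
  proof
    show "free_coords ` stab_set \<subseteq> (free_vertices - {base_vertex}) \<rightarrow>\<^sub>E {z. z ^ m = 1}"
      using free_coords_mem by blast
    show "(free_vertices - {base_vertex}) \<rightarrow>\<^sub>E {z. z ^ m = 1} \<subseteq> free_coords ` stab_set"
    proof
      fix g :: "nat \<Rightarrow> complex" assume "g \<in> (free_vertices - {base_vertex}) \<rightarrow>\<^sub>E {z. z ^ m = 1}"
      then obtain d where "d \<in> stab_set" "free_coords d = g" by (rule free_coords_surj)
      thus "g \<in> free_coords ` stab_set" by blast
    qed
  qed
  hence "bij_betw free_coords stab_set ((free_vertices - {base_vertex}) \<rightarrow>\<^sub>E {z. z ^ m = 1})"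
    using inj_free_coords by (simp add: bij_betw_def)
  hence "card stab_set = card ((free_vertices - {base_vertex}) \<rightarrow>\<^sub>E {z::complex. z ^ m = 1})"
    by (rule bij_betw_same_card)
  also have "\<dots> = m ^ (n - 1 - card E)"
    using card_roots_unity_eq[of m] m_ge_2 card_free_vertices base_vertex_free
    by (simp add: card_PiE free_vertices_def)
  finally show ?thesis .
qed

section \<open>Composition length\<close>

definition free_list :: "nat list" where
  "free_list = sorted_list_of_set (free_vertices - {base_vertex})"

lemma length_free_list: "length free_list = n - 1 - card E"
  using card_free_vertices base_vertex_free by (simp add: free_list_def free_vertices_def)

lemma free_list_nth: "c < length free_list \<Longrightarrow> free_list ! c \<in> free_vertices - {base_vertex}"
  using nth_mem[of c free_list] by (simp add: free_list_def free_vertices_def)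

lemma free_list_nth_eq_iff:
  "c < length free_list \<Longrightarrow> c' < length free_list \<Longrightarrow> free_list ! c = free_list ! c' \<longleftrightarrow> c = c'"
  by (simp add: free_list_def nth_eq_iff_index_eq free_vertices_def)

lemma free_coords_mult:
  "k \<in> free_vertices - {base_vertex} \<Longrightarrow> free_coords (\<lambda>i. d i * d' i) k = free_coords d k * free_coords d' k"
  by (simp add: free_coords_def)

lemma free_coords_inverse:
  "k \<in> free_vertices - {base_vertex} \<Longrightarrow> free_coords (\<lambda>i. inverse (d i)) k = inverse (free_coords d k)"
  by (simp add: free_coords_def divide_inverse mult.commute)

definition coord_submodule :: "(nat \<Rightarrow> nat) \<Rightarrow> (nat \<Rightarrow> complex) set" where
  "coord_submodule ex = twist ` {d \<in> stab_set. \<forall>c<length free_list. free_coords d (free_list ! c) ^ ex c = 1}"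

lemma twist_mem_coord_submodule_iff:
  "d \<in> stab_set \<Longrightarrow>
     twist d \<in> coord_submodule ex \<longleftrightarrow> (\<forall>c<length free_list. free_coords d (free_list ! c) ^ ex c = 1)"
  using inj_onD[OF twist_inj] by (auto simp: coord_submodule_def)

lemma subgroup_coord_submodule: "subgroup (coord_submodule ex) stab_mod"
proof -
  have sub: "coord_submodule ex \<subseteq> carrier stab_mod" by (auto simp: coord_submodule_def carrier_stab_mod)
  show ?thesis
  proof (rule group.subgroupI[OF group_stab_mod sub])
    have "free_coords unit_labelling k = 1" if "k \<in> free_vertices - {base_vertex}" for k
      using that base_vertex_less by (auto simp: free_coords_def unit_labelling_def free_vertices_def)
    thus "coord_submodule ex \<noteq> {}"
      using unit_labelling_mem free_list_nth by (auto simp: coord_submodule_def)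
  next
    fix x assume "x \<in> coord_submodule ex"
    then obtain d where d: "d \<in> stab_set" "x = twist d"
      and coords: "\<forall>c<length free_list. free_coords d (free_list ! c) ^ ex c = 1"
      by (auto simp: coord_submodule_def)
    hence "inv\<^bsub>stab_mod\<^esub> x = twist (\<lambda>i. inverse (d i))" using inv_stab_mod by simp
    thus "inv\<^bsub>stab_mod\<^esub> x \<in> coord_submodule ex"
      using coords twist_mem_coord_submodule_iff[OF stab_set_inverse[OF d(1)]] free_coords_inverse free_list_nth
      by (simp add: power_inverse)
  next
    fix x y assume "x \<in> coord_submodule ex" "y \<in> coord_submodule ex"
    then obtain d d' where d: "d \<in> stab_set" "x = twist d" "d' \<in> stab_set" "y = twist d'"
      and coords: "\<forall>c<length free_list. free_coords d (free_list ! c) ^ ex c = 1"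
        "\<forall>c<length free_list. free_coords d' (free_list ! c) ^ ex c = 1"
      by (auto simp: coord_submodule_def)
    thus "x \<otimes>\<^bsub>stab_mod\<^esub> y \<in> coord_submodule ex"
      using mult_stab_mod twist_mem_coord_submodule_iff[OF stab_set_mult[OF d(1,3)]] free_coords_mult free_list_nth
      by (simp add: power_mult_distrib)
  qed
qed

lemma Zm_submodule_coord_submodule: "Zm_submodule stab_mod (coord_submodule ex)"
proof -
  have "y [^]\<^bsub>stab_mod\<^esub> (k::nat) \<in> coord_submodule ex" if "y \<in> coord_submodule ex" for y k
    by (induction k) (use subgroup.one_closed[OF subgroup_coord_submodule]
        subgroup.m_closed[OF subgroup_coord_submodule _ that] in auto)
  thus ?thesis using subgroup_coord_submodule by (simp add: Zm_submodule_def)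
qed

lemma coord_submodule_mono:
  assumes "\<And>c. c < length free_list \<Longrightarrow> ex c dvd ex' c"
  shows "coord_submodule ex \<subseteq> coord_submodule ex'"
  unfolding coord_submodule_def
proof (rule image_mono, safe)
  fix d c assume coords: "\<forall>c<length free_list. free_coords d (free_list ! c) ^ ex c = 1"
    and c: "c < length free_list"
  obtain k where "ex' c = ex c * k" using assms[OF c] by (auto simp: dvd_def)
  thus "free_coords d (free_list ! c) ^ ex' c = 1" using coords c by (simp add: power_mult)
qed

text \<open>Step j of the chain raises, in coordinate c = j div cl m, the admissible order from the
  product of the first j mod cl m prime factors of m to the product of the first j mod cl m + 1.\<close>
definition chain_exponent :: "nat \<Rightarrow> nat \<Rightarrow> nat" where
  "chain_exponent j c = prime_prefix_prod m (min (cl m) (j - c * cl m))"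

lemma coord_submodule_chain_strict:
  assumes j: "j < length free_list * cl m"
  shows "coord_submodule (chain_exponent j) \<subset> coord_submodule (chain_exponent (Suc j))"
proof -
  define a where "a = j div cl m"
  define b where "b = j mod cl m"
  have "cl m > 0" using cl_pos[OF m_ge_2] by simp
  hence b: "b < cl m" and a: "a < length free_list" and "j = a * cl m + b"
    using j by (auto simp: a_def b_def div_less_iff_less_mult)
  hence ex: "chain_exponent j a = prime_prefix_prod m b" "chain_exponent (Suc j) a = prime_prefix_prod m (Suc b)"
    by (simp_all add: chain_exponent_def)
  define q where "q = prime_prefix_prod m (Suc b)"
  have q: "q \<ge> 1" "q dvd m" "\<not> q dvd prime_prefix_prod m b"
    using prime_prefix_prod_pos prime_prefix_prod_dvd_self m_ge_2 prime_prefix_prod_less[OF b]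
      prime_prefix_prod_pos[of m b] by (auto simp: q_def dest: dvd_imp_le)
  define \<zeta> :: complex where "\<zeta> = exp (2 * of_real pi * \<i> / of_nat q)"
  have \<zeta>: "\<zeta> ^ m = 1" "\<zeta> ^ q = 1" "\<zeta> ^ prime_prefix_prod m b \<noteq> 1"
    using root_of_unity_power_eq_1_iff[OF q(1)] q by (simp_all add: \<zeta>_def)
  define g where "g = restrict (\<lambda>k. if k = free_list ! a then \<zeta> else 1) (free_vertices - {base_vertex})"
  have "g \<in> (free_vertices - {base_vertex}) \<rightarrow>\<^sub>E {z. z ^ m = 1}" using \<zeta>(1) by (simp add: g_def)
  then obtain d where d: "d \<in> stab_set" "free_coords d = g" by (rule free_coords_surj)
  have coord: "free_coords d (free_list ! c) = (if c = a then \<zeta> else 1)" if "c < length free_list" for c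
    using d(2) free_list_nth[OF that] free_list_nth_eq_iff[OF that a] by (simp add: g_def)
  have "twist d \<in> coord_submodule (chain_exponent (Suc j))"
    using ex \<zeta>(2) coord by (simp add: twist_mem_coord_submodule_iff[OF d(1)] q_def)
  moreover have "twist d \<notin> coord_submodule (chain_exponent j)"
    using ex \<zeta>(3) coord a by (auto simp: twist_mem_coord_submodule_iff[OF d(1)])
  moreover have "coord_submodule (chain_exponent j) \<subseteq> coord_submodule (chain_exponent (Suc j))"
    by (rule coord_submodule_mono) (simp add: chain_exponent_def prime_prefix_prod_dvd)
  ultimately show ?thesis by blast
qed

lemma composition_length_stab_mod: "composition_length stab_mod = (n - 1 - card E) * cl m"
  unfolding composition_length_def
proof (rule Greatest_equality)
  show "\<exists>C. (\<forall>i\<le>(n - 1 - card E) * cl m. Zm_submodule stab_mod (C i)) \<and>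
      (\<forall>i<(n - 1 - card E) * cl m. C i \<subset> C (Suc i))"
    using Zm_submodule_coord_submodule coord_submodule_chain_strict length_free_list
    by (intro exI[of _ "\<lambda>j. coord_submodule (chain_exponent j)"]) simp
next
  fix k assume "\<exists>C. (\<forall>i\<le>k. Zm_submodule stab_mod (C i)) \<and> (\<forall>i<k. C i \<subset> C (Suc i))"
  then obtain C where C: "\<forall>i\<le>k. subgroup (C i) stab_mod" "\<forall>i<k. C i \<subset> C (Suc i)"
    by (auto simp: Zm_submodule_def)
  have card: "card (carrier stab_mod) = m ^ (n - 1 - card E)" using card_stab_mod card_stab_set by simp
  hence "finite (carrier stab_mod)" using m_ge_2 card_ge_0_finite by force
  hence "k \<le> cl (card (carrier stab_mod))" using subgroup_chain_length_le[OF group_stab_mod _ C] by simp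
  thus "k \<le> (n - 1 - card E) * cl m" using card cl_power m_ge_2 by simp
qed

end

theorem theorem4p1:
  fixes m n :: nat and E :: "nat set set"
  assumes "m \<ge> 2" and "n \<ge> 1"
    and "uniform_hypergraph m n E"
    and "hg_connected n E"
    and "cored E"
  shows "hg_s m n E = m ^ (n - 1 - card E)
    \<and> hg_gamma m n E = (n - 1 - card E) * cl m"
proof -
  interpret connected_cored_hypergraph m n E
    using assms by unfold_locales
  show ?thesis
    using stab_index_eq_card_stab_set card_stab_set composition_length_stab_mod
    by (simp add: hg_s_def hg_gamma_def stab_dim_def)
qed

end
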